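(* Assume Setting (S) and $\gamma>4\alpha$. Then for every $\varepsilon\in\big(0,\frac{\gamma^2-16\alpha^2}{\gamma^2+16\alpha^2}\big)$ and every $T>\frac{2\pi}{\sqrt{\gamma^2(1-\varepsilon)-16\alpha^2(1+\varepsilon)}}$ there exist $n_0=n_0(\varepsilon)\in\mathbb{N}$, independent of $T$ and of the coefficients $C_n,D_n,R_n$, and a constant $c(T,\varepsilon)>0$ such that $$\int_0^\infty k(t)\big(|u_1^{n_0}(t)|^2+|u_2^{n_0}(t)|^2\big)dt\ \ge\ c(T,\varepsilon)\sum_{n=n_0}^\infty(1+e^{-2\operatorname{Im}\omega_nT})\big(|C_n|^2+|d_nD_n|^2\big).$$
   Context: Setting (S): $(\omega_n),(\zeta_n),(C_n),(D_n),(c_n),(d_n)$ ($n\ge1$) are complex sequences and $(r_n),(R_n)$ are real sequences. There are constants $\gamma>0$, $\alpha>0$, $\chi<0$, $n'\in\mathbb{N}$, $\mu>0$, $\nu>1/2$, $M>0$, $0<c_1\le c_2$ such that: (H1) $\liminf_{n\to\infty}(\operatorname{Re}\omega_{n+1}-\operatorname{Re}\omega_n)=\liminf_{n\to\infty}(\operatorname{Re}\zeta_{n+1}-\operatorname{Re}\zeta_n)=\gamma$; (H2) $\operatorname{Im}\omega_n\to\alpha$, $r_n\to\chi$, $\operatorname{Im}\zeta_n\to0$; (H3) $\omega_n\ne0$, $\zeta_n\neq0$, $c_1|\zeta_n|\le|d_n|\le c_2|\zeta_n|$ and $|c_n|\le M/|\omega_n|$ for all $n$; (H4) $|R_n|\le\mu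 n^{-\nu}(|C_n|^2+|d_nD_n|^2)^{1/2}$ for $n\ge n'$ and $|R_n|\le\mu(|C_n|^2+|d_nD_n|^2)^{1/2}$ for $n\le n'$; (H5) $\sum_n(|C_n|^2+|d_nD_n|^2)<\infty$. For $n_0\in\mathbb{N}$ and $t\in\mathbb{R}$, $u_1^{n_0}(t)=\sum_{n\ge n_0}\big(C_ne^{i\omega_nt}+\overline{C_n}e^{-i\overline{\omega_n}t}+R_ne^{r_nt}+D_ne^{i\zeta_nt}+\overline{D_n}e^{-i\overline{\zeta_n}t}\big)$, $u_2^{n_0}(t)=\sum_{n\ge n_0}\big(d_nD_ne^{i\zeta_nt}+\overline{d_nD_n}e^{-i\overline{\zeta_n}t}+c_nC_ne^{i\omega_nt}+\overline{c_nC_n}e^{-i\overline{\omega_n}t}\big)$. For $T>0$, $k(t):=\sin(\pi t/T)$ for $t\in[0,T]$ and $k(t):=0$ otherwise. *)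

theory Defs
  imports "HOL-Analysis.Analysis"
begin

definition kfun :: "real \<Rightarrow> real \<Rightarrow> real" where
  "kfun T t = (if 0 \<le> t \<and> t \<le> T then sin (pi * t / T) else 0)"

definition u1_part ::
  "(nat \<Rightarrow> complex) \<Rightarrow> (nat \<Rightarrow> complex) \<Rightarrow> (nat \<Rightarrow> real) \<Rightarrow>
   (nat \<Rightarrow> complex) \<Rightarrow> (nat \<Rightarrow> complex) \<Rightarrow> (nat \<Rightarrow> real) \<Rightarrow>
   nat \<Rightarrow> nat \<Rightarrow> real \<Rightarrow> complex" where
  "u1_part \<omega> \<zeta> r C D R n0 N t =
     (\<Sum>n\<in>{n0..<N}. C n * exp (\<i> * \<omega> n * of_real t)
        + cnj (C n) * exp (- \<i> * cnj (\<omega> n) * of_real t)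
        + of_real (R n * exp (r n * t))
        + D n * exp (\<i> * \<zeta> n * of_real t)
        + cnj (D n) * exp (- \<i> * cnj (\<zeta> n) * of_real t))"

definition u2_part ::
  "(nat \<Rightarrow> complex) \<Rightarrow> (nat \<Rightarrow> complex) \<Rightarrow> (nat \<Rightarrow> complex) \<Rightarrow> (nat \<Rightarrow> complex) \<Rightarrow>
   (nat \<Rightarrow> complex) \<Rightarrow> (nat \<Rightarrow> complex) \<Rightarrow>
   nat \<Rightarrow> nat \<Rightarrow> real \<Rightarrow> complex" where
  "u2_part \<omega> \<zeta> c d C D n0 N t =
     (\<Sum>n\<in>{n0..<N}. d n * D n * exp (\<i> * \<zeta> n * of_real t)
        + cnj (d n * D n) * exp (- \<i> * cnj (\<zeta> n) * of_real t)
        + c n * C n * exp (\<i> * \<omega> n * of_real t)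
        + cnj (c n * C n) * exp (- \<i> * cnj (\<omega> n) * of_real t))"

end

theory Submission
  imports Defs
begin

text \<open>
  For finitely many frequencies \<open>\<lambda>\<^sub>i\<close> whose real parts are \<open>g\<close>-separated and whose imaginary parts
  are bounded by \<open>Y\<close>, the energy \<open>\<integral>\<^sub>0\<^sup>T sin(\<pi>t/T) |\<Sum> a\<^sub>i exp(i\<lambda>\<^sub>it)|\<^sup>2 dt\<close> is a Hermitian form whose entries
  are explicit transforms of the sine window.  Its diagonal is \<open>\<Sum> |a\<^sub>i|\<^sup>2 K(Im \<lambda>\<^sub>i)\<close>; the
  off-diagonal entries decay like \<open>1/(g\<^sup>2k\<^sup>2 - (\<pi>/T)\<^sup>2 - 4Y\<^sup>2)\<close> in the label distance \<open>k\<close>, and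
  Schur's test together with \<open>\<Sum>\<^sub>k\<^sub>\<noteq>\<^sub>0 1/(4k\<^sup>2 - 1) = 1\<close> bounds them by \<open>(1 - \<eta>)\<close> times the diagonal once
  \<open>4((\<pi>/T)\<^sup>2 + 4Y\<^sup>2) \<le> (1 - \<eta>) g\<^sup>2\<close>.  This is Ingham's inequality with the weight \<open>sin(\<pi>t/T)\<close>.

  From some index \<open>n\<^sub>0\<close> on, the frequencies \<open>\<omega>\<^sub>n\<close>, \<open>\<zeta>\<^sub>n\<close> and their mirror images \<open>-\<omega>\<^sub>n\<^sup>*\<close>, \<open>-\<zeta>\<^sub>n\<^sup>*\<close>
  satisfy these hypotheses with \<open>g\<close> slightly below \<open>\<gamma>\<close> and \<open>Y\<close> slightly above \<open>\<alpha>\<close>; the lower bound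
  on \<open>T\<close> is exactly what leaves room for such \<open>g\<close>, \<open>Y\<close> and some \<open>\<eta> > 0\<close>.  Beyond \<open>n\<^sub>0\<close> the couplings
  \<open>c\<^sub>n\<close> and \<open>1/d\<^sub>n\<close> are small, and the real exponentials, dominated by \<open>exp(\<chi>t/2)\<close>, contribute
  little by Cauchy-Schwarz and \<open>\<Sum> n\<^bsup>-2\<nu>\<^esup> < \<infinity>\<close>.  Hence every block of the partial sums beyond \<open>n\<^sub>0\<close>
  has energy comparable to its weighted \<open>\<ell>\<^sup>2\<close> mass, uniformly in the block: the upper bound makes the
  energies of the partial sums converge, and the lower bound passes to the limit.
\<close>

section \<open>The sine window\<close>

text \<open>Closed forms of \<open>\<integral>\<^sub>0\<^sup>T sin(\<pi>t/T) exp(i\<mu>t) dt\<close> (for \<open>\<mu>\<^sup>2 \<noteq> (\<pi>/T)\<^sup>2\<close>) and of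
  \<open>\<integral>\<^sub>0\<^sup>T sin(\<pi>t/T) exp(-2yt) dt\<close>.\<close>

definition sine_window_transform :: "real \<Rightarrow> complex \<Rightarrow> complex" where
  "sine_window_transform T \<mu> =
     of_real (pi/T) * (1 + exp (\<i> * \<mu> * of_real T)) / (of_real ((pi/T)^2) - \<mu>^2)"

definition sine_window_weight :: "real \<Rightarrow> real \<Rightarrow> real" where
  "sine_window_weight T y = (pi/T) * (1 + exp (-2*y*T)) / ((pi/T)^2 + 4*y^2)"

lemma sine_window_nonresonant:
  assumes "T > 0" and "Re \<mu> = 0 \<or> (pi/T)^2 < (Re \<mu>)^2 - (Im \<mu>)^2"
  shows "of_real ((pi/T)^2) \<noteq> \<mu>^2"
proof -
  have re: "Re (\<mu>^2) = (Re \<mu>)^2 - (Im \<mu>)^2" by (simp add: power2_eq_square)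
  have pos: "0 < (pi/T)^2" using assms(1) by simp
  have "Re (\<mu>^2) \<noteq> (pi/T)^2"
  proof (cases "Re \<mu> = 0")
    case True
    then have "Re (\<mu>^2) + (Im \<mu>)^2 = 0" unfolding re by simp
    with pos zero_le_power2[of "Im \<mu>"] show ?thesis by linarith
  next
    case False
    then have "(pi/T)^2 < (Re \<mu>)^2 - (Im \<mu>)^2" using assms(2) by simp
    then show ?thesis unfolding re by linarith
  qed
  then show ?thesis by (metis Re_complex_of_real)
qed

lemma has_integral_sine_window_exp:
  assumes T: "T > 0" and ne: "of_real ((pi/T)^2) \<noteq> \<mu>^2"
  shows "((\<lambda>t. of_real (sin (pi * t/T)) * exp (\<i> * \<mu> * of_real t))
           has_integral sine_window_transform T \<mu>) {0..T}"
proof -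
  define b where "b = pi / T"
  define c where "c = inverse (of_real (b^2) - \<mu>^2)"
  define G where "G z = c * (exp (\<i> * \<mu> * z) * (\<i> * \<mu> * sin (of_real b * z) - of_real b * cos (of_real b * z)))"
    for z :: complex
  have c: "c * (of_real (b^2) - \<mu>^2) = 1"
    using ne by (simp add: b_def c_def)
  have G': "(G has_field_derivative exp (\<i> * \<mu> * z) * sin (of_real b * z)) (at z)" for z
  proof -
    have e: "c * (exp (\<i> * \<mu> * z) * sin (of_real b * z) * (of_real (b^2) - \<mu>^2))
          = exp (\<i> * \<mu> * z) * sin (of_real b * z)"
      using c by (metis mult.commute mult.left_commute mult.right_neutral)
    show ?thesis
      unfolding G_def
      apply (rule derivative_eq_intros refl)+
      apply (subst e[symmetric])
      apply (simp add: algebra_simps power2_eq_square)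
      done
  qed
  have "((\<lambda>t. exp (\<i> * \<mu> * of_real t) * sin (of_real b * of_real t))
          has_integral (G (of_real T) - G (of_real 0))) {0..T}"
    using T G' by (intro fundamental_theorem_of_calculus has_vector_derivative_real_field) auto
  moreover have "G (of_real T) - G (of_real 0) = sine_window_transform T \<mu>"
  proof -
    have "b * T = pi" using T by (simp add: b_def)
    then have bT: "of_real b * of_real T = (of_real pi :: complex)" by (metis of_real_mult)
    show ?thesis
      unfolding G_def sine_window_transform_def bT
      by (simp add: sin_of_real cos_of_real c_def b_def divide_inverse algebra_simps)
  qed
  moreover have "exp (\<i> * \<mu> * of_real t) * sin (of_real b * of_real t)
                 = of_real (sin (pi * t/T)) * exp (\<i> * \<mu> * of_real t)" for t
    by (simp add: b_def sin_of_real[symmetric] mult.commute)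
  ultimately show ?thesis by simp
qed

lemma sine_window_weight_pos: "T > 0 \<Longrightarrow> sine_window_weight T y > 0"
  unfolding sine_window_weight_def by (intro divide_pos_pos mult_pos_pos) (auto intro: add_pos_nonneg)

lemma sine_window_transform_imaginary:
  assumes "T > 0"
  shows "sine_window_transform T (of_real (2*y) * \<i>) = of_real (sine_window_weight T y)"
proof -
  have "exp (\<i> * (of_real (2*y) * \<i>) * of_real T) = of_real (exp (-2*y*T))"
    by (simp add: exp_of_real[symmetric] algebra_simps)
  moreover have "(of_real (2*y) * \<i>)^2 = (of_real (-4*y^2) :: complex)"
    by (simp add: power2_eq_square algebra_simps)
  ultimately show ?thesis
    unfolding sine_window_transform_def sine_window_weight_def by simp
qed

lemma has_integral_sine_window_exp_real:
  assumes T: "T > 0"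
  shows "((\<lambda>t. sin (pi * t / T) * exp (-2 * y * t)) has_integral sine_window_weight T y) {0..T}"
proof -
  have ne: "of_real ((pi/T)^2) \<noteq> (of_real (2 * y) * \<i> :: complex)^2"
    using T by (intro sine_window_nonresonant) auto
  have exp_eq: "exp (\<i> * (of_real (2 * y) * \<i>) * of_real t) = (of_real (exp (-2 * y * t)) :: complex)" for t
    by (simp add: exp_of_real[symmetric] algebra_simps)
  have "((\<lambda>t. Re (of_real (sin (pi * t/T)) * exp (\<i> * (of_real (2 * y) * \<i>) * of_real t)))
          has_integral Re (sine_window_transform T (of_real (2 * y) * \<i>))) {0..T}"
    using has_integral_linear[OF has_integral_sine_window_exp[OF T ne] bounded_linear_Re]
    by (simp add: o_def)
  then show ?thesis
    unfolding exp_eq sine_window_transform_imaginary[OF T] by simp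
qed

lemma norm_sine_window_transform_le:
  assumes T: "T > 0" and pos: "(Re \<mu>)^2 - (Im \<mu>)^2 - (pi/T)^2 > 0"
  shows "cmod (sine_window_transform T \<mu>)
           \<le> (pi/T) * (1 + exp (- Im \<mu> * T)) / ((Re \<mu>)^2 - (Im \<mu>)^2 - (pi/T)^2)"
proof -
  have num: "cmod (1 + exp (\<i> * \<mu> * of_real T)) \<le> 1 + exp (- Im \<mu> * T)"
    using norm_triangle_ineq[of 1 "exp (\<i> * \<mu> * of_real T)"] by simp
  have "Re (of_real ((pi/T)^2) - \<mu>^2) = (pi/T)^2 - ((Re \<mu>)^2 - (Im \<mu>)^2)"
    by (simp add: power2_eq_square)
  then have den: "(Re \<mu>)^2 - (Im \<mu>)^2 - (pi/T)^2 \<le> cmod (of_real ((pi/T)^2) - \<mu>^2)"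
    using abs_Re_le_cmod[of "of_real ((pi/T)^2) - \<mu>^2"] by linarith
  have "cmod (sine_window_transform T \<mu>)
        = (pi/T) * cmod (1 + exp (\<i> * \<mu> * of_real T)) / cmod (of_real ((pi/T)^2) - \<mu>^2)"
    unfolding sine_window_transform_def using T by (simp add: norm_divide norm_mult)
  also have "\<dots> \<le> (pi/T) * (1 + exp (- Im \<mu> * T)) / ((Re \<mu>)^2 - (Im \<mu>)^2 - (pi/T)^2)"
    using T num den pos by (intro frac_le mult_left_mono) auto
  finally show ?thesis .
qed

lemma sine_window_weight_lower:
  assumes T: "T > 0" and y: "\<bar>y\<bar> \<le> Y"
  shows "(pi/T) * (1 + exp (-2 * y * T)) / ((pi/T)^2 + 4 * Y^2) \<le> sine_window_weight T y"
  unfolding sine_window_weight_def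
proof (rule divide_left_mono)
  show "(pi/T)^2 + 4 * y^2 \<le> (pi/T)^2 + 4 * Y^2"
    using y power_mono[of "\<bar>y\<bar>" Y 2] by simp
  show "0 \<le> pi / T * (1 + exp (-2 * y * T))"
    using T by (intro mult_nonneg_nonneg add_nonneg_nonneg) auto
  show "0 < ((pi/T)^2 + 4 * Y^2) * ((pi/T)^2 + 4 * y^2)"
    using T by (intro mult_pos_pos add_pos_nonneg) auto
qed

lemma sine_window_weight_upper:
  assumes T: "T > 0" and y: "\<bar>y\<bar> \<le> Y"
  shows "sine_window_weight T y \<le> (pi/T) * (1 + exp (2 * Y * T)) / (pi/T)^2"
  unfolding sine_window_weight_def
proof (rule frac_le)
  have "-2 * y * T \<le> 2 * Y * T"
    using mult_right_mono[of "-y" Y T] y T by (simp add: abs_le_iff algebra_simps)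
  then show "pi / T * (1 + exp (-2 * y * T)) \<le> pi / T * (1 + exp (2 * Y * T))"
    using T by (intro mult_left_mono) auto
qed (use T in \<open>auto intro: add_nonneg_nonneg\<close>)

lemma sine_window_weight_ratio:
  assumes T: "T > 0" and s: "s > 0" and y: "\<bar>y\<bar> \<le> Y"
  shows "sine_window_weight T s \<le> 2 * (1 + Y^2 / s^2) * sine_window_weight T y"
proof -
  define b where "b = pi / T"
  have b: "b > 0" using T by (simp add: b_def)
  have y2: "y^2 \<le> Y^2" using y power_mono[of "\<bar>y\<bar>" Y 2] by simp
  have K: "1 + Y^2 / s^2 > 0" by (simp add: add_pos_nonneg)
  have den: "b^2 + 4 * y^2 \<le> (1 + Y^2/s^2) * (b^2 + 4 * s^2)"
  proof -
    have "(1 + Y^2/s^2) * (b^2 + 4 * s^2) = b^2 + 4 * s^2 + b^2 * Y^2/s^2 + 4 * Y^2"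
      using s by (simp add: field_simps)
    moreover have "0 \<le> b^2 * Y^2 / s^2" by simp
    ultimately show ?thesis using y2 zero_le_power2[of s] by linarith
  qed
  have "sine_window_weight T s \<le> 2 * b / (b^2 + 4 * s^2)"
    unfolding sine_window_weight_def b_def[symmetric]
    using s T b by (intro divide_right_mono) (auto intro: add_nonneg_nonneg)
  also have "\<dots> = 2 * b * (1 + Y^2/s^2) / ((1 + Y^2/s^2) * (b^2 + 4 * s^2))"
    using K by simp
  also have "\<dots> \<le> 2 * b * (1 + Y^2/s^2) / (b^2 + 4 * y^2)"
    using den K b by (intro divide_left_mono) (auto intro!: mult_pos_pos add_pos_nonneg)
  also have "\<dots> = 2 * (1 + Y^2 / s^2) * (b / (b^2 + 4 * y^2))"
    by simp
  also have "\<dots> \<le> 2 * (1 + Y^2 / s^2) * sine_window_weight T y"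
    unfolding sine_window_weight_def b_def[symmetric] using b K
    by (intro mult_left_mono divide_right_mono) auto
  finally show ?thesis .
qed

section \<open>Weighted energy\<close>

text \<open>The integral \<open>\<integral> k(t) |f(t)|\<^sup>2 dt\<close> of the theorem, over the support \<open>[0, T]\<close> of the cut-off \<open>k\<close>.\<close>

definition window_energy :: "real \<Rightarrow> (real \<Rightarrow> complex) \<Rightarrow> real" where
  "window_energy T f = integral {0..T} (\<lambda>t. sin (pi * t / T) * (cmod (f t))^2)"

lemma sine_window_nonneg:
  assumes "T > 0" "t \<in> {0..T}"
  shows "0 \<le> sin (pi * t / T)"
proof (rule sin_ge_zero)
  show "0 \<le> pi * t / T" "pi * t / T \<le> pi"
    using assms by (auto simp: pos_divide_le_eq)
qed

lemma window_energy_integrable: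
  "continuous_on {0..T} f \<Longrightarrow> (\<lambda>t. sin (pi * t / T) * (cmod (f t))^2) integrable_on {0..T}"
  by (cases "T = 0") (auto intro!: integrable_continuous_interval continuous_intros integrable_0)

lemma window_energy_uminus: "window_energy T (\<lambda>t. - f t) = window_energy T f"
  by (simp add: window_energy_def)

lemma norm_add_squared_le:
  fixes x y :: "'a :: real_normed_vector"
  assumes "\<delta> > 0"
  shows "(norm (x + y))^2 \<le> (1 + \<delta>) * (norm x)^2 + (1 + 1 / \<delta>) * (norm y)^2"
proof -
  have "2 * (norm x * norm y) \<le> \<delta> * (norm x)^2 + (norm y)^2 / \<delta>"
  proof -
    have "0 \<le> (\<delta> * norm x - norm y)^2" by simp
    then have "(2 * (norm x * norm y)) * \<delta> \<le> (\<delta> * (norm x)^2 + (norm y)^2 / \<delta>) * \<delta>"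
      using assms by (simp add: power2_eq_square algebra_simps)
    then show ?thesis using assms by simp
  qed
  moreover have "(norm (x + y))^2 \<le> (norm x + norm y)^2"
    by (intro power_mono norm_triangle_ineq) auto
  ultimately show ?thesis
    by (simp add: power2_eq_square algebra_simps)
qed

lemma window_energy_add_le:
  assumes T: "T > 0" and d: "\<delta> > 0" and f: "continuous_on {0..T} f" and g: "continuous_on {0..T} g"
  shows "window_energy T (\<lambda>t. f t + g t) \<le> (1 + \<delta>) * window_energy T f + (1 + 1 / \<delta>) * window_energy T g"
proof -
  have "window_energy T (\<lambda>t. f t + g t)
        \<le> integral {0..T} (\<lambda>t. (1 + \<delta>) * (sin (pi * t / T) * (cmod (f t))^2)
                                + (1 + 1 / \<delta>) * (sin (pi * t / T) * (cmod (g t))^2))"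
    unfolding window_energy_def
  proof (rule integral_le)
    fix t assume "t \<in> {0..T}"
    with T have "0 \<le> sin (pi * t / T)" by (rule sine_window_nonneg)
    from mult_left_mono[OF norm_add_squared_le[OF d, of "f t" "g t"] this]
    show "sin (pi * t / T) * (cmod (f t + g t))^2
          \<le> (1 + \<delta>) * (sin (pi * t / T) * (cmod (f t))^2) + (1 + 1 / \<delta>) * (sin (pi * t / T) * (cmod (g t))^2)"
      by (simp add: algebra_simps)
  qed (use f g in \<open>intro window_energy_integrable integrable_add integrable_on_mult_right continuous_intros; simp\<close>)+
  also have "\<dots> = (1 + \<delta>) * window_energy T f + (1 + 1 / \<delta>) * window_energy T g"
    unfolding window_energy_def using f g
    by (intro integral_unique has_integral_add has_integral_mult_right integrable_integral
          window_energy_integrable)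
  finally show ?thesis .
qed

lemma window_energy_add_ge:
  assumes T: "T > 0" and f: "continuous_on {0..T} f" and g: "continuous_on {0..T} g"
  shows "window_energy T f / 2 - window_energy T g \<le> window_energy T (\<lambda>t. f t + g t)"
proof -
  have "window_energy T (\<lambda>t. (f t + g t) + - g t)
        \<le> 2 * window_energy T (\<lambda>t. f t + g t) + 2 * window_energy T (\<lambda>t. - g t)"
    using window_energy_add_le[OF T _ continuous_on_add[OF f g] continuous_on_minus[OF g], of 1]
    by simp
  then show ?thesis by (simp add: window_energy_uminus)
qed

lemma integral_kfun_eq_window_energy:
  assumes T: "T > 0" and f: "continuous_on {0..T} f" and g: "continuous_on {0..T} g"
  shows "integral {0..} (\<lambda>t. kfun T t * ((cmod (f t))^2 + (cmod (g t))^2))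
         = window_energy T f + window_energy T g"
proof (rule integral_unique)
  have "((\<lambda>t. sin (pi * t / T) * (cmod (f t))^2 + sin (pi * t / T) * (cmod (g t))^2)
          has_integral window_energy T f + window_energy T g) {0..T}"
    unfolding window_energy_def using f g
    by (intro has_integral_add integrable_integral window_energy_integrable)
  then have "((\<lambda>t. kfun T t * ((cmod (f t))^2 + (cmod (g t))^2))
               has_integral window_energy T f + window_energy T g) {0..T}"
    by (rule has_integral_eq[rotated]) (simp add: kfun_def algebra_simps)
  then show "((\<lambda>t. kfun T t * ((cmod (f t))^2 + (cmod (g t))^2))
               has_integral window_energy T f + window_energy T g) {0..}"
    by (rule has_integral_on_superset) (auto simp: kfun_def)
qed

section \<open>Ingham's inequality for finite exponential families\<close>

lemma norm_sum_exp_squared: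
  fixes a lam :: "'i \<Rightarrow> complex"
  shows "(cmod (\<Sum>i\<in>I. a i * exp (\<i> * lam i * of_real t)))^2
       = Re (\<Sum>i\<in>I. \<Sum>j\<in>I. a i * cnj (a j) * exp (\<i> * (lam i - cnj (lam j)) * of_real t))"
proof -
  let ?z = "\<Sum>i\<in>I. a i * exp (\<i> * lam i * of_real t)"
  have "(cmod ?z)^2 = Re (?z * cnj ?z)"
    by (metis Re_complex_of_real complex_norm_square)
  also have "?z * cnj ?z = (\<Sum>i\<in>I. \<Sum>j\<in>I. a i * exp (\<i> * lam i * of_real t)
                                              * (cnj (a j) * exp (- \<i> * cnj (lam j) * of_real t)))"
    by (simp add: sum_product cnj_sum exp_cnj)
  also have "\<dots> = (\<Sum>i\<in>I. \<Sum>j\<in>I. a i * cnj (a j) * exp (\<i> * (lam i - cnj (lam j)) * of_real t))"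
    by (intro sum.cong refl) (simp add: exp_diff algebra_simps exp_minus divide_inverse right_diff_distrib)
  finally show ?thesis .
qed

lemma window_energy_exp_sum:
  fixes a lam :: "'i \<Rightarrow> complex"
  assumes I: "finite I" and T: "T > 0"
    and ne: "\<And>i j. i \<in> I \<Longrightarrow> j \<in> I \<Longrightarrow> i \<noteq> j \<Longrightarrow> of_real ((pi/T)^2) \<noteq> (lam i - cnj (lam j))^2"
  shows "window_energy T (\<lambda>t. \<Sum>i\<in>I. a i * exp (\<i> * lam i * of_real t))
         = (\<Sum>i\<in>I. (cmod (a i))^2 * sine_window_weight T (Im (lam i)))
           + Re (\<Sum>i\<in>I. \<Sum>j\<in>I - {i}. a i * cnj (a j) * sine_window_transform T (lam i - cnj (lam j)))"
proof -
  define F where "F i j = a i * cnj (a j) * sine_window_transform T (lam i - cnj (lam j))" for i j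
  let ?f = "\<lambda>t. \<Sum>i\<in>I. \<Sum>j\<in>I. a i * cnj (a j)
                 * (of_real (sin (pi*t/T)) * exp (\<i> * (lam i - cnj (lam j)) * of_real t))"
  have "of_real ((pi/T)^2) \<noteq> (lam i - cnj (lam j))^2" if "i \<in> I" "j \<in> I" for i j
  proof (cases "i = j")
    case True
    then show ?thesis using T by (intro sine_window_nonresonant disjI1) auto
  qed (use ne that in blast)
  then have "(?f has_integral (\<Sum>i\<in>I. \<Sum>j\<in>I. F i j)) {0..T}"
    unfolding F_def by (intro has_integral_sum I ballI has_integral_mult_right has_integral_sine_window_exp T)
  from has_integral_linear[OF this bounded_linear_Re]
  have "((\<lambda>t. Re (?f t)) has_integral Re (\<Sum>i\<in>I. \<Sum>j\<in>I. F i j)) {0..T}"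
    by (simp add: o_def)
  moreover have "Re (?f t) = sin (pi*t/T) * (cmod (\<Sum>i\<in>I. a i * exp (\<i> * lam i * of_real t)))^2" for t
  proof -
    have "?f t = of_real (sin (pi*t/T))
                 * (\<Sum>i\<in>I. \<Sum>j\<in>I. a i * cnj (a j) * exp (\<i> * (lam i - cnj (lam j)) * of_real t))"
      by (simp add: sum_distrib_left algebra_simps)
    then show ?thesis by (simp add: norm_sum_exp_squared)
  qed
  moreover have "F i i = of_real ((cmod (a i))^2 * sine_window_weight T (Im (lam i)))" for i
    using sine_window_transform_imaginary[OF T, of "Im (lam i)"]
    by (simp add: F_def complex_diff_cnj flip: complex_norm_square)
  then have "Re (\<Sum>i\<in>I. \<Sum>j\<in>I. F i j)
             = (\<Sum>i\<in>I. (cmod (a i))^2 * sine_window_weight T (Im (lam i))) + Re (\<Sum>i\<in>I. \<Sum>j\<in>I - {i}. F i j)"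
    by (simp add: sum.remove[OF I] sum.distrib)
  ultimately show ?thesis
    unfolding window_energy_def F_def by (simp add: integral_unique)
qed

lemma one_plus_exp_le_sqrt_mult:
  "1 + exp (-(y + y') * T) \<le> sqrt (1 + exp (-2 * y * T)) * sqrt (1 + exp (-2 * y' * T))"
proof -
  define u where "u = exp (-y * T)"
  define v where "v = exp (-y' * T)"
  have "exp (-(y + y') * T) = u * v" "exp (-2 * y * T) = u^2" "exp (-2 * y' * T) = v^2"
    by (simp_all add: u_def v_def power2_eq_square algebra_simps flip: exp_add)
  moreover have "(1 + u * v)^2 \<le> (1 + u^2) * (1 + v^2)"
    using zero_le_power2[of "u - v"] by (simp add: power2_eq_square algebra_simps)
  then have "1 + u * v \<le> sqrt ((1 + u^2) * (1 + v^2))"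
    by (rule real_le_rsqrt)
  ultimately show ?thesis by (simp add: real_sqrt_mult)
qed

lemma offdiag_resonance_margin:
  assumes Y: "\<bar>Im z\<bar> \<le> Y" "\<bar>Im z'\<bar> \<le> Y" and x: "x^2 \<le> (Re z - Re z')^2"
  shows "x^2 - (b^2 + 4 * Y^2) \<le> (Re (z - cnj z'))^2 - (Im (z - cnj z'))^2 - b^2"
proof -
  have "\<bar>Im (z - cnj z')\<bar> \<le> 2 * Y" using Y by simp
  then have "(Im (z - cnj z'))^2 \<le> (2 * Y)^2"
    by (metis abs_ge_zero power2_abs power_mono)
  then show ?thesis
    using x by (simp add: power_mult_distrib)
qed

lemma norm_sine_window_transform_offdiag_le:
  assumes T: "T > 0" and Y: "\<bar>Im z\<bar> \<le> Y" "\<bar>Im z'\<bar> \<le> Y"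
    and x: "x^2 \<le> (Re z - Re z')^2" and D: "(pi/T)^2 + 4 * Y^2 < x^2"
  shows "cmod (sine_window_transform T (z - cnj z'))
         \<le> sqrt (1 + exp (-2 * Im z * T)) * sqrt (1 + exp (-2 * Im z' * T))
             * ((pi/T) / (x^2 - ((pi/T)^2 + 4 * Y^2)))"
proof -
  let ?\<mu> = "z - cnj z'"
  note den = offdiag_resonance_margin[OF Y x, of "pi/T"]
  have num: "1 + exp (- Im ?\<mu> * T) \<le> sqrt (1 + exp (-2 * Im z * T)) * sqrt (1 + exp (-2 * Im z' * T))"
    using one_plus_exp_le_sqrt_mult[of "Im z" "Im z'" T] by simp
  have "cmod (sine_window_transform T ?\<mu>)
        \<le> (pi/T) * (1 + exp (- Im ?\<mu> * T)) / ((Re ?\<mu>)^2 - (Im ?\<mu>)^2 - (pi/T)^2)"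
    using den D by (intro norm_sine_window_transform_le T) linarith
  also have "\<dots> \<le> (pi/T) * (1 + exp (- Im ?\<mu> * T)) / (x^2 - ((pi/T)^2 + 4 * Y^2))"
    using T den D by (intro divide_left_mono mult_pos_pos) (auto intro: add_nonneg_nonneg)
  also have "\<dots> \<le> (pi/T) * (sqrt (1 + exp (-2 * Im z * T)) * sqrt (1 + exp (-2 * Im z' * T)))
                  / (x^2 - ((pi/T)^2 + 4 * Y^2))"
    using T D num by (intro divide_right_mono mult_left_mono) auto
  finally show ?thesis by (simp add: ac_simps)
qed

lemma norm_gram_entry_le:
  assumes T: "T > 0" and Y: "\<bar>Im z\<bar> \<le> Y" "\<bar>Im z'\<bar> \<le> Y"
    and x: "x^2 \<le> (Re z - Re z')^2" and D: "(pi/T)^2 + 4 * Y^2 < x^2"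
  shows "cmod (a * cnj a' * sine_window_transform T (z - cnj z'))
         \<le> ((cmod a)^2 * (1 + exp (-2 * Im z * T)) + (cmod a')^2 * (1 + exp (-2 * Im z' * T))) / 2
             * ((pi/T) / (x^2 - ((pi/T)^2 + 4 * Y^2)))"
proof -
  define w where "w y = 1 + exp (-2 * y * T)" for y
  define h where "h = (pi/T) / (x^2 - ((pi/T)^2 + 4 * Y^2))"
  have h: "h \<ge> 0" using T D by (simp add: h_def)
  have "cmod (a * cnj a' * sine_window_transform T (z - cnj z'))
        \<le> (cmod a * cmod a') * (sqrt (w (Im z)) * sqrt (w (Im z')) * h)"
    unfolding norm_mult complex_mod_cnj w_def h_def
    by (intro mult_left_mono norm_sine_window_transform_offdiag_le T Y x D) auto
  also have "\<dots> = (cmod a * sqrt (w (Im z))) * (cmod a' * sqrt (w (Im z'))) * h"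
    by (simp add: ac_simps)
  also have "\<dots> \<le> ((cmod a)^2 * w (Im z) + (cmod a')^2 * w (Im z')) / 2 * h"
    using sum_squares_bound[of "cmod a * sqrt (w (Im z))" "cmod a' * sqrt (w (Im z'))"] h
    by (intro mult_right_mono) (auto simp: w_def power_mult_distrib add_nonneg_nonneg)
  finally show ?thesis by (simp add: w_def h_def)
qed

lemma sum_offdiag_swap:
  assumes "finite I"
  shows "(\<Sum>i\<in>I. \<Sum>j\<in>I - {i}. G i j) = (\<Sum>j\<in>I. \<Sum>i\<in>I - {j}. G i j)"
proof -
  have "I - {i} = {j. j \<in> I \<and> i \<noteq> j}" "I - {i} = {j. j \<in> I \<and> j \<noteq> i}" for i
    by auto
  then show ?thesis
    using sum.swap_restrict[OF assms assms, of G "\<lambda>i j. i \<noteq> j"] by simp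
qed

lemma norm_offdiag_sum_le:
  fixes F :: "'i \<Rightarrow> 'i \<Rightarrow> 'a :: real_normed_vector"
  assumes I: "finite I"
    and F: "\<And>i j. i \<in> I \<Longrightarrow> j \<in> I \<Longrightarrow> i \<noteq> j \<Longrightarrow> norm (F i j) \<le> (P i + P j) / 2 * h i j"
    and h: "\<And>i j. h i j = h j i"
  shows "norm (\<Sum>i\<in>I. \<Sum>j\<in>I - {i}. F i j) \<le> (\<Sum>i\<in>I. P i * (\<Sum>j\<in>I - {i}. h i j))"
proof -
  have "norm (\<Sum>i\<in>I. \<Sum>j\<in>I - {i}. F i j) \<le> (\<Sum>i\<in>I. norm (\<Sum>j\<in>I - {i}. F i j))"
    by (rule norm_sum)
  also have "\<dots> \<le> (\<Sum>i\<in>I. \<Sum>j\<in>I - {i}. norm (F i j))"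
    by (intro sum_mono norm_sum)
  also have "\<dots> \<le> (\<Sum>i\<in>I. \<Sum>j\<in>I - {i}. (P i + P j) / 2 * h i j)"
    using F by (intro sum_mono) auto
  also have "\<dots> = (\<Sum>i\<in>I. \<Sum>j\<in>I - {i}. P i * h i j) / 2 + (\<Sum>i\<in>I. \<Sum>j\<in>I - {i}. P j * h i j) / 2"
    by (simp add: sum.distrib sum_divide_distrib add_divide_distrib algebra_simps)
  also have "(\<Sum>i\<in>I. \<Sum>j\<in>I - {i}. P j * h i j) = (\<Sum>i\<in>I. \<Sum>j\<in>I - {i}. P i * h i j)"
    using sum_offdiag_swap[OF I, of "\<lambda>i j. P j * h i j"] h by simp
  finally show ?thesis by (simp add: sum_distrib_left)
qed

lemma sum_inverse_4k2_minus_1_eq: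
  "(\<Sum>k\<in>{-int m..int m} - {0}. 1 / (4 * (of_int k)^2 - 1 :: real)) = 2 * real m / (2 * real m + 1)"
proof (induction m)
  case 0
  then show ?case by simp
next
  case (Suc m)
  have split: "{-int (Suc m)..int (Suc m)} - {0}
               = insert (int (Suc m)) (insert (- int (Suc m)) ({-int m..int m} - {0}))"
    by auto
  have "4 * (real (Suc m))^2 - 1 = (2 * real m + 1) * (2 * real m + 3)"
    by (simp add: power2_eq_square algebra_simps)
  moreover have "2 / ((2 * real m + 1) * (2 * real m + 3)) + 2 * real m / (2 * real m + 1)
                 = 2 * (real m + 1) / (2 * real m + 3)"
    by (simp add: divide_simps) (simp add: algebra_simps)
  ultimately have "2 / (4 * (real (Suc m))^2 - 1) + 2 * real m / (2 * real m + 1)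
                   = 2 * real (Suc m) / (2 * real (Suc m) + 1)"
    by (simp add: algebra_simps)
  moreover have "(of_int (- int (Suc m)) :: real)^2 = (real (Suc m))^2"
    by (simp add: power2_eq_square algebra_simps)
  ultimately show ?case
    unfolding split using Suc.IH by simp
qed

lemma sum_inverse_4k2_minus_1_le:
  assumes "finite K" "0 \<notin> K"
  shows "(\<Sum>k\<in>K. 1 / (4 * (of_int k)^2 - 1 :: real)) \<le> 1"
proof -
  obtain m where m: "\<forall>n\<in>(\<lambda>k. nat \<bar>k\<bar>) ` K. n \<le> m"
    using assms(1) finite_nat_set_iff_bounded_le by blast
  have nonneg: "0 \<le> 1 / (4 * (of_int k)^2 - 1 :: real)" if "k \<noteq> 0" for k
  proof -
    have "(1::real) \<le> \<bar>of_int k\<bar>" using that by linarith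
    then have "1 \<le> (of_int k :: real)^2" using one_le_power[of "\<bar>of_int k::real\<bar>" 2] by simp
    then show ?thesis by simp
  qed
  have "(\<Sum>k\<in>K. 1 / (4 * (of_int k)^2 - 1 :: real))
        \<le> (\<Sum>k\<in>{-int m..int m} - {0}. 1 / (4 * (of_int k)^2 - 1))"
    using m assms nonneg by (intro sum_mono2) force+
  also have "\<dots> \<le> 1"
    unfolding sum_inverse_4k2_minus_1_eq by simp
  finally show ?thesis .
qed

lemma offdiag_row_sum_le:
  fixes rho :: "'i \<Rightarrow> int" and g A :: real
  assumes I: "finite I" and inj: "inj_on rho I" and i: "i \<in> I" and g: "g > 0" and A: "4 * A \<le> g^2"
  shows "(\<Sum>j\<in>I - {i}. 1 / (g^2 * (of_int (rho i - rho j))^2 - A)) \<le> 4 / g^2"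
proof -
  have entry: "1 / (g^2 * (of_int (rho i - rho j))^2 - A) \<le> 4 / g^2 * (1 / (4 * (of_int (rho i - rho j))^2 - 1))"
    if j: "j \<in> I - {i}" for j
  proof -
    define k where "k = (of_int (rho i - rho j) :: real)"
    have "rho i \<noteq> rho j" using inj i j by (auto simp: inj_on_def)
    then have "1 \<le> \<bar>k\<bar>" unfolding k_def by linarith
    then have "1 \<le> k^2" using one_le_power[of "\<bar>k\<bar>" 2] by simp
    then have pos: "0 < g^2 / 4 * (4 * k^2 - 1)" using g by simp
    have le: "g^2 / 4 * (4 * k^2 - 1) \<le> g^2 * k^2 - A"
      using A by (simp add: algebra_simps)
    have "1 / (g^2 * k^2 - A) \<le> 1 / (g^2 / 4 * (4 * k^2 - 1))"
      using le pos by (intro divide_left_mono) (auto intro: mult_pos_pos[OF order.strict_trans2[OF pos le] pos])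
    also have "\<dots> = 4 / g^2 * (1 / (4 * k^2 - 1))" by simp
    finally show ?thesis unfolding k_def .
  qed
  have inj': "inj_on (\<lambda>j. rho i - rho j) (I - {i})"
    using inj by (auto simp: inj_on_def)
  have "(\<Sum>j\<in>I - {i}. 1 / (g^2 * (of_int (rho i - rho j))^2 - A))
        \<le> (\<Sum>j\<in>I - {i}. 4 / g^2 * (1 / (4 * (of_int (rho i - rho j))^2 - 1)))"
    by (rule sum_mono) (rule entry)
  also have "\<dots> = 4 / g^2 * (\<Sum>k\<in>(\<lambda>j. rho i - rho j) ` (I - {i}). 1 / (4 * (of_int k)^2 - 1))"
    by (simp only: sum_distrib_left sum.reindex[OF inj'] o_def)
  also have "\<dots> \<le> 4 / g^2 * 1"
    using inj i I by (intro mult_left_mono sum_inverse_4k2_minus_1_le) (auto simp: inj_on_def)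
  finally show ?thesis by simp
qed

lemma weighted_row_sum_le:
  fixes rho :: "'i \<Rightarrow> int"
  assumes I: "finite I" and inj: "inj_on rho I" and i: "i \<in> I" and T: "T > 0" and g: "g > 0"
    and eta: "\<eta> \<ge> 0" and y: "\<bar>y\<bar> \<le> Y" and A: "4 * ((pi/T)^2 + 4 * Y^2) \<le> (1 - \<eta>) * g^2"
  shows "(1 + exp (-2 * y * T)) * (\<Sum>j\<in>I - {i}. (pi/T) / ((g * of_int (rho i - rho j))^2 - ((pi/T)^2 + 4 * Y^2)))
         \<le> (1 - \<eta>) * sine_window_weight T y"
proof -
  define b where "b = pi / T"
  define A0 where "A0 = b^2 + 4 * Y^2"
  have b: "b > 0" using T by (simp add: b_def)
  have A0: "4 * A0 \<le> (1 - \<eta>) * g^2" using A by (simp add: A0_def b_def)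
  moreover have "(1 - \<eta>) * g^2 \<le> g^2" using eta by (simp add: algebra_simps)
  ultimately have A0': "4 * A0 \<le> g^2" by linarith
  define e where "e = 1 + exp (-2 * y * T)"
  have e: "e \<ge> 0" by (simp add: e_def add_nonneg_nonneg)
  have "(\<Sum>j\<in>I - {i}. b / ((g * of_int (rho i - rho j))^2 - A0))
        = b * (\<Sum>j\<in>I - {i}. 1 / (g^2 * (of_int (rho i - rho j))^2 - A0))"
    by (simp add: sum_distrib_left power_mult_distrib)
  also have "\<dots> \<le> b * (4 / g^2)"
    using b by (intro mult_left_mono offdiag_row_sum_le[OF I inj i g A0']) auto
  finally have "e * (\<Sum>j\<in>I - {i}. b / ((g * of_int (rho i - rho j))^2 - A0)) \<le> e * (b * (4 / g^2))"
    using e by (rule mult_left_mono)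
  also have "\<dots> = sine_window_weight T y * (b^2 + 4 * y^2) * (4 / g^2)"
  proof -
    have "0 < b^2 + 4 * y^2" using b by (simp add: add_pos_nonneg)
    then show ?thesis by (simp add: sine_window_weight_def e_def flip: b_def)
  qed
  also have "\<dots> \<le> sine_window_weight T y * A0 * (4 / g^2)"
    using y power_mono[of "\<bar>y\<bar>" Y 2] sine_window_weight_pos[OF T]
    by (intro mult_right_mono mult_left_mono) (auto simp: A0_def less_imp_le)
  also have "\<dots> = sine_window_weight T y * (4 * A0 / g^2)"
    by simp
  also have "\<dots> \<le> sine_window_weight T y * (1 - \<eta>)"
    using A0 g sine_window_weight_pos[OF T] by (intro mult_left_mono) (auto simp: divide_le_eq less_imp_le)
  finally show ?thesis by (simp add: e_def A0_def b_def ac_simps)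
qed

lemma ingham_inequality:
  fixes a lam :: "'i \<Rightarrow> complex" and rho :: "'i \<Rightarrow> int"
  assumes I: "finite I" and inj: "inj_on rho I" and T: "T > 0" and g: "g > 0" and eta: "\<eta> > 0"
    and gap: "\<And>i j. i \<in> I \<Longrightarrow> j \<in> I \<Longrightarrow> g * \<bar>of_int (rho i - rho j)\<bar> \<le> \<bar>Re (lam i) - Re (lam j)\<bar>"
    and Y: "\<And>i. i \<in> I \<Longrightarrow> \<bar>Im (lam i)\<bar> \<le> Y"
    and A: "4 * ((pi/T)^2 + 4 * Y^2) \<le> (1 - \<eta>) * g^2"
  shows "\<eta> * (\<Sum>i\<in>I. (cmod (a i))^2 * sine_window_weight T (Im (lam i)))
           \<le> window_energy T (\<lambda>t. \<Sum>i\<in>I. a i * exp (\<i> * lam i * of_real t))"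
    and "window_energy T (\<lambda>t. \<Sum>i\<in>I. a i * exp (\<i> * lam i * of_real t))
           \<le> 2 * (\<Sum>i\<in>I. (cmod (a i))^2 * sine_window_weight T (Im (lam i)))"
proof -
  define A0 where "A0 = (pi/T)^2 + 4 * Y^2"
  define S where "S = (\<Sum>i\<in>I. (cmod (a i))^2 * sine_window_weight T (Im (lam i)))"
  define Off where "Off = (\<Sum>i\<in>I. \<Sum>j\<in>I - {i}. a i * cnj (a j) * sine_window_transform T (lam i - cnj (lam j)))"
  define P where "P i = (cmod (a i))^2 * (1 + exp (-2 * Im (lam i) * T))" for i
  define h where "h i j = (pi/T) / ((g * of_int (rho i - rho j))^2 - A0)" for i j
  have "0 < A0" using T by (simp add: A0_def add_pos_nonneg)
  moreover have "(1 - \<eta>) * g^2 \<le> g^2" using eta by (simp add: algebra_simps)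
  with A have "4 * A0 \<le> g^2" unfolding A0_def by linarith
  ultimately have far: "A0 < (g * of_int (rho i - rho j))^2 \<and> (g * of_int (rho i - rho j))^2 \<le> (Re (lam i) - Re (lam j))^2"
    if "i \<in> I" "j \<in> I" "i \<noteq> j" for i j
  proof -
    have "rho i \<noteq> rho j" using inj that by (auto simp: inj_on_def)
    then have "1 \<le> \<bar>of_int (rho i - rho j) :: real\<bar>" by linarith
    then have "1 \<le> (of_int (rho i - rho j) :: real)^2"
      using one_le_power[of "\<bar>of_int (rho i - rho j) :: real\<bar>" 2] by simp
    then have "g^2 \<le> (g * of_int (rho i - rho j))^2"
      using mult_left_mono[of 1 _ "g^2"] by (simp add: power_mult_distrib)
    moreover have "(g * of_int (rho i - rho j))^2 \<le> (Re (lam i) - Re (lam j))^2"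
      using gap[OF that(1,2)] g by (simp add: abs_le_square_iff[symmetric] abs_mult)
    ultimately show ?thesis using \<open>0 < A0\<close> \<open>4 * A0 \<le> g^2\<close> by linarith
  qed
  have energy: "window_energy T (\<lambda>t. \<Sum>i\<in>I. a i * exp (\<i> * lam i * of_real t)) = S + Re Off"
    unfolding S_def Off_def
  proof (rule window_energy_exp_sum[OF I T])
    fix i j assume ij: "i \<in> I" "j \<in> I" "i \<noteq> j"
    have "(g * of_int (rho i - rho j))^2 - A0
          \<le> (Re (lam i - cnj (lam j)))^2 - (Im (lam i - cnj (lam j)))^2 - (pi/T)^2"
      using offdiag_resonance_margin[OF Y[OF ij(1)] Y[OF ij(2)]] far[OF ij] by (simp add: A0_def)
    with far[OF ij] show "of_real ((pi/T)^2) \<noteq> (lam i - cnj (lam j))^2"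
      by (intro sine_window_nonresonant T disjI2) linarith
  qed
  have "cmod Off \<le> (\<Sum>i\<in>I. P i * (\<Sum>j\<in>I - {i}. h i j))"
    unfolding Off_def
  proof (rule norm_offdiag_sum_le[OF I])
    fix i j assume ij: "i \<in> I" "j \<in> I" "i \<noteq> j"
    show "cmod (a i * cnj (a j) * sine_window_transform T (lam i - cnj (lam j))) \<le> (P i + P j) / 2 * h i j"
      using norm_gram_entry_le[OF T Y[OF ij(1)] Y[OF ij(2)]] far[OF ij] by (simp add: P_def h_def A0_def)
  qed (simp add: h_def power_mult_distrib power2_commute)
  also have "\<dots> \<le> (\<Sum>i\<in>I. (cmod (a i))^2 * ((1 - \<eta>) * sine_window_weight T (Im (lam i))))"
    using weighted_row_sum_le[OF I inj _ T g less_imp_le[OF eta] Y A]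
    by (intro sum_mono) (simp add: P_def h_def A0_def mult.assoc mult_left_mono)
  finally have "\<bar>Re Off\<bar> \<le> (1 - \<eta>) * S"
    using abs_Re_le_cmod[of Off] by (simp add: S_def sum_distrib_left ac_simps)
  moreover have "0 \<le> \<eta> * S"
    using eta sine_window_weight_pos[OF T] unfolding S_def
    by (intro mult_nonneg_nonneg sum_nonneg) (auto intro: less_imp_le)
  ultimately show "\<eta> * S \<le> window_energy T (\<lambda>t. \<Sum>i\<in>I. a i * exp (\<i> * lam i * of_real t))"
    and "window_energy T (\<lambda>t. \<Sum>i\<in>I. a i * exp (\<i> * lam i * of_real t)) \<le> 2 * S"
    unfolding energy by (simp_all add: algebra_simps abs_le_iff)
qed

section \<open>Partial sums of the series\<close>

lemma diff_ge_of_step_ge: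
  fixes f :: "nat \<Rightarrow> real"
  assumes steps: "\<And>n. m \<le> n \<Longrightarrow> g \<le> f (Suc n) - f n" and "m \<le> n1" "n1 \<le> n2"
  shows "g * (real n2 - real n1) \<le> f n2 - f n1"
  using assms(3)
proof (induction n2 rule: dec_induct)
  case (step n)
  then show ?case using steps[of n] \<open>m \<le> n1\<close> by (simp add: algebra_simps)
qed simp

lemma sum_product_bool: "(\<Sum>x\<in>A \<times> (UNIV :: bool set). f x) = (\<Sum>n\<in>A. f (n, True) + f (n, False))"
proof -
  have "(\<Sum>n\<in>A. \<Sum>b\<in>UNIV. f (n, b)) = (\<Sum>x\<in>A \<times> (UNIV :: bool set). f x)"
    by (simp add: sum.cartesian_product)
  then show ?thesis by (simp add: UNIV_bool add.commute)
qed

definition separated_at :: "real \<Rightarrow> real \<Rightarrow> (nat \<Rightarrow> complex) \<Rightarrow> nat \<Rightarrow> bool" where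
  "separated_at g Y lam n \<longleftrightarrow>
     g \<le> Re (lam (Suc n)) - Re (lam n) \<and> g / 2 \<le> Re (lam n) \<and> \<bar>Im (lam n)\<bar> \<le> Y"

definition trig_part :: "(nat \<Rightarrow> complex) \<Rightarrow> (nat \<Rightarrow> complex) \<Rightarrow> nat \<Rightarrow> nat \<Rightarrow> real \<Rightarrow> complex" where
  "trig_part lam c m N t =
     (\<Sum>n\<in>{m..<N}. c n * exp (\<i> * lam n * of_real t) + cnj (c n) * exp (- \<i> * cnj (lam n) * of_real t))"

definition weighted_mass :: "real \<Rightarrow> (nat \<Rightarrow> complex) \<Rightarrow> (nat \<Rightarrow> complex) \<Rightarrow> nat \<Rightarrow> nat \<Rightarrow> real" where
  "weighted_mass T lam c m N = (\<Sum>n\<in>{m..<N}. (cmod (c n))^2 * sine_window_weight T (Im (lam n)))"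

lemma weighted_mass_nonneg: "T > 0 \<Longrightarrow> 0 \<le> weighted_mass T lam c m N"
  unfolding weighted_mass_def by (intro sum_nonneg mult_nonneg_nonneg) (auto intro: less_imp_le sine_window_weight_pos)

lemma continuous_on_trig_part: "continuous_on S (trig_part lam c m N)"
  unfolding trig_part_def by (intro continuous_intros)

text \<open>The frequencies \<open>\<lambda>\<^sub>n\<close> and their mirror images \<open>-\<lambda>\<^sub>n\<^sup>*\<close> form one family, labelled by the
  integers \<open>n - m\<close> and \<open>-(n - m) - 1\<close>; the condition \<open>Re \<lambda>\<^sub>m \<ge> g/2\<close> keeps the two halves apart.\<close>
lemma trig_part_energy_bounds:
  fixes c lam :: "nat \<Rightarrow> complex"
  assumes T: "T > 0" and g: "g > 0" and eta: "\<eta> > 0"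
    and sep: "\<And>n. m \<le> n \<Longrightarrow> separated_at g Y lam n"
    and A: "4 * ((pi/T)^2 + 4 * Y^2) \<le> (1 - \<eta>) * g^2"
  shows "2 * \<eta> * weighted_mass T lam c m N \<le> window_energy T (trig_part lam c m N)"
    and "window_energy T (trig_part lam c m N) \<le> 4 * weighted_mass T lam c m N"
proof -
  let ?I = "{m..<N} \<times> (UNIV :: bool set)"
  define a where "a x = (if snd x then c (fst x) else cnj (c (fst x)))" for x
  define mu where "mu x = (if snd x then lam (fst x) else - cnj (lam (fst x)))" for x
  define rho where "rho x = (if snd x then int (fst x) - int m else - (int (fst x) - int m) - 1)" for x
  have trig: "trig_part lam c m N = (\<lambda>t. \<Sum>x\<in>?I. a x * exp (\<i> * mu x * of_real t))"
    by (simp add: fun_eq_iff trig_part_def sum_product_bool a_def mu_def)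
  have weights: "(\<Sum>x\<in>?I. (cmod (a x))^2 * sine_window_weight T (Im (mu x)))
                 = 2 * weighted_mass T lam c m N"
    by (simp add: weighted_mass_def sum_product_bool a_def mu_def sum_distrib_left mult.commute)
  have inj: "inj_on rho ?I"
    by (auto simp: inj_on_def rho_def split: if_splits)
  have mono: "g * (real n2 - real n1) \<le> Re (lam n2) - Re (lam n1)" if "m \<le> n1" "n1 \<le> n2" for n1 n2
    using sep that by (intro diff_ge_of_step_ge[where f = "\<lambda>n. Re (lam n)"]) (auto simp: separated_at_def)
  have gap: "g * \<bar>of_int (rho x - rho y)\<bar> \<le> \<bar>Re (mu x) - Re (mu y)\<bar>" if "x \<in> ?I" "y \<in> ?I" for x y
  proof -
    obtain n1 b1 n2 b2 where xy: "x = (n1, b1)" "y = (n2, b2)" by (cases x, cases y)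
    have n: "m \<le> n1" "m \<le> n2" using that xy by auto
    have same: "g * \<bar>real n1 - real n2\<bar> \<le> \<bar>Re (lam n1) - Re (lam n2)\<bar>"
      using mono[OF n(1), of n2] mono[OF n(2), of n1] g
      by (cases "n1 \<le> n2") (auto simp: abs_if algebra_simps split: if_splits)
    have "g / 2 \<le> Re (lam m)" using sep[of m] by (simp add: separated_at_def)
    then have cross: "g * (real n1 - real m + (real n2 - real m) + 1) \<le> Re (lam n1) + Re (lam n2)"
      using mono[OF order_refl n(1)] mono[OF order_refl n(2)] by (simp add: algebra_simps)
    show ?thesis
      using same cross n g unfolding xy
      by (cases b1; cases b2) (auto simp: rho_def mu_def abs_if algebra_simps split: if_splits)
  qed
  have Y: "\<bar>Im (mu x)\<bar> \<le> Y" if "x \<in> ?I" for x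
    using sep that by (auto simp: mu_def separated_at_def)
  note ingham = ingham_inequality[OF _ inj T g eta gap Y A, of a]
  show "2 * \<eta> * weighted_mass T lam c m N \<le> window_energy T (trig_part lam c m N)"
    using ingham(1) unfolding trig weights by simp
  show "window_energy T (trig_part lam c m N) \<le> 4 * weighted_mass T lam c m N"
    using ingham(2) unfolding trig weights by simp
qed

definition decay_part :: "(nat \<Rightarrow> real) \<Rightarrow> (nat \<Rightarrow> real) \<Rightarrow> nat \<Rightarrow> nat \<Rightarrow> real \<Rightarrow> complex" where
  "decay_part r R m N t = (\<Sum>n\<in>{m..<N}. of_real (R n * exp (r n * t)))"

lemma continuous_on_decay_part: "continuous_on S (decay_part r R m N)"
  unfolding decay_part_def by (intro continuous_intros)

lemma u1_part_eq:
  "u1_part \<omega> \<zeta> r C D R m N = (\<lambda>t. trig_part \<omega> C m N t + decay_part r R m N t + trig_part \<zeta> D m N t)"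
  by (simp add: fun_eq_iff u1_part_def trig_part_def decay_part_def sum.distrib add.assoc)

lemma u2_part_eq:
  "u2_part \<omega> \<zeta> c d C D m N = (\<lambda>t. trig_part \<zeta> (\<lambda>n. d n * D n) m N t + trig_part \<omega> (\<lambda>n. c n * C n) m N t)"
  by (simp add: fun_eq_iff u2_part_def trig_part_def sum.distrib add.assoc)

lemma continuous_on_u1_part: "continuous_on S (u1_part \<omega> \<zeta> r C D R m N)"
  unfolding u1_part_eq by (intro continuous_intros continuous_on_trig_part continuous_on_decay_part)

lemma continuous_on_u2_part: "continuous_on S (u2_part \<omega> \<zeta> c d C D m N)"
  unfolding u2_part_eq by (intro continuous_intros continuous_on_trig_part)

lemma u1_part_split:
  "m \<le> k \<Longrightarrow> k \<le> N \<Longrightarrow> u1_part \<omega> \<zeta> r C D R m N t = u1_part \<omega> \<zeta> r C D R m k t + u1_part \<omega> \<zeta> r C D R k N t"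
  unfolding u1_part_def by (simp add: sum.atLeastLessThan_concat)

lemma u2_part_split:
  "m \<le> k \<Longrightarrow> k \<le> N \<Longrightarrow> u2_part \<omega> \<zeta> c d C D m N t = u2_part \<omega> \<zeta> c d C D m k t + u2_part \<omega> \<zeta> c d C D k N t"
  unfolding u2_part_def by (simp add: sum.atLeastLessThan_concat)

lemma window_energy_decay_part_le:
  assumes T: "T > 0" and r: "\<And>n. n \<in> {m..<N} \<Longrightarrow> r n \<le> - s"
  shows "window_energy T (decay_part r R m N) \<le> (\<Sum>n\<in>{m..<N}. \<bar>R n\<bar>)^2 * sine_window_weight T s"
  unfolding window_energy_def
proof (rule has_integral_le[OF integrable_integral])
  show "(\<lambda>t. sin (pi * t / T) * (cmod (decay_part r R m N t))^2) integrable_on {0..T}"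
    by (intro window_energy_integrable continuous_on_decay_part)
  show "((\<lambda>t. (\<Sum>n\<in>{m..<N}. \<bar>R n\<bar>)^2 * (sin (pi * t / T) * exp (-2 * s * t)))
          has_integral (\<Sum>n\<in>{m..<N}. \<bar>R n\<bar>)^2 * sine_window_weight T s) {0..T}"
    by (intro has_integral_mult_right has_integral_sine_window_exp_real T)
  fix t assume t: "t \<in> {0..T}"
  have "cmod (decay_part r R m N t) \<le> (\<Sum>n\<in>{m..<N}. \<bar>R n\<bar> * exp (r n * t))"
    unfolding decay_part_def by (rule order_trans[OF norm_sum]) (simp add: norm_mult)
  also have "\<dots> \<le> (\<Sum>n\<in>{m..<N}. \<bar>R n\<bar> * exp (- s * t))"
  proof (intro sum_mono mult_left_mono)
    fix n assume "n \<in> {m..<N}"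
    then show "exp (r n * t) \<le> exp (- s * t)"
      using mult_right_mono[OF r, of n t] t by simp
  qed simp
  finally have "(cmod (decay_part r R m N t))^2 \<le> ((\<Sum>n\<in>{m..<N}. \<bar>R n\<bar>) * exp (- s * t))^2"
    by (intro power_mono) (auto simp: sum_distrib_right)
  also have "\<dots> = (\<Sum>n\<in>{m..<N}. \<bar>R n\<bar>)^2 * exp (-2 * s * t)"
    by (simp add: power_mult_distrib power2_eq_square algebra_simps flip: exp_add)
  finally show "sin (pi * t / T) * (cmod (decay_part r R m N t))^2
      \<le> (\<Sum>n\<in>{m..<N}. \<bar>R n\<bar>)^2 * (sin (pi * t / T) * exp (-2 * s * t))"
    using sine_window_nonneg[OF T t] by (simp add: mult_left_mono algebra_simps)
qed

lemma sum_abs_squared_le: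
  assumes R: "\<And>n. n \<in> A \<Longrightarrow> \<bar>R n\<bar> \<le> \<mu> * z n * sqrt (q n)" and "\<mu> \<ge> 0"
    and "\<And>n. z n \<ge> 0" and q: "\<And>n. q n \<ge> 0"
  shows "(\<Sum>n\<in>A. \<bar>R n\<bar>)^2 \<le> \<mu>^2 * (\<Sum>n\<in>A. (z n)^2) * (\<Sum>n\<in>A. q n)"
proof -
  have "(\<Sum>n\<in>A. \<bar>R n\<bar>)^2 \<le> (\<mu> * (\<Sum>n\<in>A. z n * sqrt (q n)))^2"
    using R assms(2,3) by (intro power_mono) (auto simp: sum_distrib_left mult.assoc intro: sum_mono sum_nonneg)
  also have "\<dots> \<le> \<mu>^2 * ((\<Sum>n\<in>A. (z n)^2) * (\<Sum>n\<in>A. (sqrt (q n))^2))"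
    by (simp add: power_mult_distrib mult_left_mono Cauchy_Schwarz_ineq_sum)
  finally show ?thesis using q by (simp add: mult.assoc)
qed

lemma window_energy_decay_part_small:
  assumes T: "T > 0" and s: "s > 0"
    and r: "\<And>n. m \<le> n \<Longrightarrow> r n \<le> - s"
    and R: "\<And>n. m \<le> n \<Longrightarrow> \<bar>R n\<bar> \<le> \<mu> * z n * sqrt ((cmod (C n))^2 + (cmod (E n))^2)"
    and "\<mu> \<ge> 0" and "\<And>n. z n \<ge> 0"
    and Y: "\<And>n. m \<le> n \<Longrightarrow> \<bar>Im (\<omega> n)\<bar> \<le> Y \<and> \<bar>Im (\<zeta> n)\<bar> \<le> Y"
    and small: "\<mu>^2 * (\<Sum>n\<in>{m..<N}. (z n)^2) * (2 * (1 + Y^2 / s^2)) \<le> \<kappa>"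
  shows "window_energy T (decay_part r R m N) \<le> \<kappa> * (weighted_mass T \<omega> C m N + weighted_mass T \<zeta> E m N)"
proof -
  define K where "K = 2 * (1 + Y^2 / s^2)"
  have K: "K > 0" by (simp add: K_def add_pos_nonneg)
  have "window_energy T (decay_part r R m N) \<le> (\<Sum>n\<in>{m..<N}. \<bar>R n\<bar>)^2 * sine_window_weight T s"
    using r by (intro window_energy_decay_part_le T) auto
  also have "\<dots> \<le> \<mu>^2 * (\<Sum>n\<in>{m..<N}. (z n)^2) * (\<Sum>n\<in>{m..<N}. (cmod (C n))^2 + (cmod (E n))^2)
                  * sine_window_weight T s"
    using R assms(5,6) sine_window_weight_pos[OF T, of s]
    by (intro mult_right_mono sum_abs_squared_le) auto
  also have "(\<Sum>n\<in>{m..<N}. (cmod (C n))^2 + (cmod (E n))^2) * sine_window_weight T s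
             \<le> K * (weighted_mass T \<omega> C m N + weighted_mass T \<zeta> E m N)"
  proof -
    have "sine_window_weight T s \<le> K * sine_window_weight T y" if "\<bar>y\<bar> \<le> Y" for y
      unfolding K_def by (rule sine_window_weight_ratio[OF T s that])
    then have w: "sine_window_weight T s \<le> K * sine_window_weight T (Im (\<omega> n))"
      "sine_window_weight T s \<le> K * sine_window_weight T (Im (\<zeta> n))" if "n \<in> {m..<N}" for n
      using Y[of n] that by auto
    have "(\<Sum>n\<in>{m..<N}. (cmod (C n))^2 + (cmod (E n))^2) * sine_window_weight T s
          = (\<Sum>n\<in>{m..<N}. (cmod (C n))^2 * sine_window_weight T s + (cmod (E n))^2 * sine_window_weight T s)"
      by (simp add: sum_distrib_right distrib_right)
    also have "\<dots> \<le> (\<Sum>n\<in>{m..<N}. (cmod (C n))^2 * (K * sine_window_weight T (Im (\<omega> n)))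
                                   + (cmod (E n))^2 * (K * sine_window_weight T (Im (\<zeta> n))))"
      using w by (intro sum_mono add_mono mult_left_mono) auto
    also have "\<dots> = K * (weighted_mass T \<omega> C m N + weighted_mass T \<zeta> E m N)"
      by (simp add: weighted_mass_def sum_distrib_left sum.distrib algebra_simps)
    finally show ?thesis .
  qed
  then have "\<mu>^2 * (\<Sum>n\<in>{m..<N}. (z n)^2) * (\<Sum>n\<in>{m..<N}. (cmod (C n))^2 + (cmod (E n))^2)
               * sine_window_weight T s
             \<le> \<mu>^2 * (\<Sum>n\<in>{m..<N}. (z n)^2) * (K * (weighted_mass T \<omega> C m N + weighted_mass T \<zeta> E m N))"
    by (simp only: mult.assoc) (intro mult_left_mono, auto intro: sum_nonneg)
  also have "\<dots> \<le> \<kappa> * (weighted_mass T \<omega> C m N + weighted_mass T \<zeta> E m N)"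
    using small weighted_mass_nonneg[OF T]
    by (simp only: mult.assoc[symmetric] K_def[symmetric]) (intro mult_right_mono add_nonneg_nonneg; simp)
  finally show ?thesis .
qed

lemma window_energy_add3_ge:
  assumes T: "T > 0" and "continuous_on {0..T} f" "continuous_on {0..T} g" "continuous_on {0..T} h"
  shows "window_energy T f / 2 - 2 * window_energy T g - 2 * window_energy T h
         \<le> window_energy T (\<lambda>t. f t + g t + h t)"
proof -
  have "window_energy T f / 2 - window_energy T (\<lambda>t. g t + h t) \<le> window_energy T (\<lambda>t. f t + (g t + h t))"
    using assms by (intro window_energy_add_ge continuous_intros)
  moreover have "window_energy T (\<lambda>t. g t + h t) \<le> 2 * window_energy T g + 2 * window_energy T h"
    using window_energy_add_le[OF T _ assms(3,4), of 1] by simp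
  ultimately show ?thesis by (simp add: add.assoc)
qed

lemma window_energy_add3_le:
  assumes T: "T > 0" and "continuous_on {0..T} f" "continuous_on {0..T} g" "continuous_on {0..T} h"
  shows "window_energy T (\<lambda>t. f t + g t + h t)
         \<le> 2 * window_energy T f + 4 * window_energy T g + 4 * window_energy T h"
proof -
  have "window_energy T (\<lambda>t. f t + (g t + h t)) \<le> 2 * window_energy T f + 2 * window_energy T (\<lambda>t. g t + h t)"
    using window_energy_add_le[OF T _ assms(2) continuous_on_add[OF assms(3,4)], of 1] by simp
  moreover have "window_energy T (\<lambda>t. g t + h t) \<le> 2 * window_energy T g + 2 * window_energy T h"
    using window_energy_add_le[OF T _ assms(3,4), of 1] by simp
  ultimately show ?thesis by (simp add: add.assoc)
qed

lemma weighted_mass_le_coeff: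
  assumes T: "T > 0" and "\<And>n. n \<in> {m..<N} \<Longrightarrow> (cmod (c n))^2 \<le> \<kappa> * (cmod (c' n))^2"
  shows "weighted_mass T lam c m N \<le> \<kappa> * weighted_mass T lam c' m N"
  unfolding weighted_mass_def sum_distrib_left
  using assms sine_window_weight_pos[OF T]
  by (intro sum_mono) (auto simp: mult.assoc[symmetric] intro!: mult_right_mono less_imp_le)

lemma weighted_mass_le:
  assumes T: "T > 0" and Y: "\<And>n. n \<in> {m..<N} \<Longrightarrow> \<bar>Im (lam n)\<bar> \<le> Y"
  shows "weighted_mass T lam c m N \<le> (pi/T) * (1 + exp (2 * Y * T)) / (pi/T)^2 * (\<Sum>n\<in>{m..<N}. (cmod (c n))^2)"
  unfolding weighted_mass_def sum_distrib_left
proof (rule sum_mono)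
  fix n assume "n \<in> {m..<N}"
  from mult_left_mono[OF sine_window_weight_upper[OF T Y[OF this]], of "(cmod (c n))^2"]
  show "(cmod (c n))^2 * sine_window_weight T (Im (lam n))
        \<le> (pi/T) * (1 + exp (2 * Y * T)) / (pi/T)^2 * (cmod (c n))^2"
    by (simp add: mult.commute)
qed

lemma weighted_mass_add_ge:
  assumes T: "T > 0"
    and \<omega>: "\<And>n. n \<in> {m..<N} \<Longrightarrow> 0 \<le> Im (\<omega> n) \<and> Im (\<omega> n) \<le> Y"
    and \<zeta>: "\<And>n. n \<in> {m..<N} \<Longrightarrow> \<bar>Im (\<zeta> n)\<bar> \<le> Y"
  shows "(pi/T) / (2 * ((pi/T)^2 + 4 * Y^2))
           * (\<Sum>n\<in>{m..<N}. (1 + exp (-2 * Im (\<omega> n) * T)) * ((cmod (C n))^2 + (cmod (E n))^2))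
         \<le> weighted_mass T \<omega> C m N + weighted_mass T \<zeta> E m N"
proof -
  define b where "b = pi / T"
  define v where "v n = b / (2 * (b^2 + 4 * Y^2)) * (1 + exp (-2 * Im (\<omega> n) * T))" for n
  have b: "b > 0" and den: "b^2 + 4 * Y^2 > 0"
    using T by (auto simp: b_def add_pos_nonneg)
  have v: "v n \<le> sine_window_weight T (Im (\<omega> n)) \<and> v n \<le> sine_window_weight T (Im (\<zeta> n))"
    if n: "n \<in> {m..<N}" for n
  proof
    have "1 + exp (-2 * Im (\<omega> n) * T) \<le> 2" using \<omega>[OF n] T by simp
    then have "v n \<le> b / (2 * (b^2 + 4 * Y^2)) * 2"
      unfolding v_def using b den by (intro mult_left_mono) auto
    also have "\<dots> = b / (b^2 + 4 * Y^2)" using den by (simp add: field_simps)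
    also have "\<dots> \<le> b * (1 + exp (-2 * Im (\<zeta> n) * T)) / (b^2 + 4 * Y^2)"
      using b den by (simp add: field_simps)
    also have "\<dots> \<le> sine_window_weight T (Im (\<zeta> n))"
      using sine_window_weight_lower[OF T \<zeta>[OF n]] by (simp add: b_def)
    finally show "v n \<le> sine_window_weight T (Im (\<zeta> n))" .
    have "v n \<le> b * (1 + exp (-2 * Im (\<omega> n) * T)) / (b^2 + 4 * Y^2)"
      using b den by (simp add: v_def field_simps add_pos_pos)
    also have "\<dots> \<le> sine_window_weight T (Im (\<omega> n))"
      using sine_window_weight_lower[OF T, of "Im (\<omega> n)" Y] \<omega>[OF n] by (simp add: b_def)
    finally show "v n \<le> sine_window_weight T (Im (\<omega> n))" .
  qed
  have "b / (2 * (b^2 + 4 * Y^2)) * (\<Sum>n\<in>{m..<N}. (1 + exp (-2 * Im (\<omega> n) * T)) * ((cmod (C n))^2 + (cmod (E n))^2))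
        = (\<Sum>n\<in>{m..<N}. (cmod (C n))^2 * v n + (cmod (E n))^2 * v n)"
    unfolding sum_distrib_left by (intro sum.cong refl) (simp add: v_def ring_distribs mult_ac add_divide_distrib)
  also have "\<dots> \<le> (\<Sum>n\<in>{m..<N}. (cmod (C n))^2 * sine_window_weight T (Im (\<omega> n))
                               + (cmod (E n))^2 * sine_window_weight T (Im (\<zeta> n)))"
    using v by (intro sum_mono add_mono mult_left_mono) auto
  finally show ?thesis
    by (simp add: weighted_mass_def sum.distrib b_def)
qed

lemma window_energy_trig_part_le_coeff:
  assumes T: "T > 0" and g: "g > 0" and eta: "\<eta> > 0"
    and sep: "\<And>n. m \<le> n \<Longrightarrow> separated_at g Y lam n"
    and A: "4 * ((pi/T)^2 + 4 * Y^2) \<le> (1 - \<eta>) * g^2"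
    and c: "\<And>n. m \<le> n \<Longrightarrow> (cmod (c n))^2 \<le> \<kappa> * (cmod (c' n))^2"
  shows "window_energy T (trig_part lam c m N) \<le> 4 * \<kappa> * weighted_mass T lam c' m N"
proof -
  have "weighted_mass T lam c m N \<le> \<kappa> * weighted_mass T lam c' m N"
    using c by (intro weighted_mass_le_coeff T) auto
  with trig_part_energy_bounds(2)[OF T g eta sep A, of m c N] show ?thesis
    by simp
qed

lemma partial_energy_decompose:
  assumes T: "T > 0"
  shows "window_energy T (trig_part \<omega> C m N) / 2 - 2 * window_energy T (decay_part r R m N)
           - 2 * window_energy T (trig_part \<zeta> D m N) + window_energy T (trig_part \<zeta> (\<lambda>n. d n * D n) m N) / 2
           - window_energy T (trig_part \<omega> (\<lambda>n. c n * C n) m N)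
         \<le> window_energy T (u1_part \<omega> \<zeta> r C D R m N) + window_energy T (u2_part \<omega> \<zeta> c d C D m N)"
    and "window_energy T (u1_part \<omega> \<zeta> r C D R m N) + window_energy T (u2_part \<omega> \<zeta> c d C D m N)
         \<le> 2 * window_energy T (trig_part \<omega> C m N) + 4 * window_energy T (decay_part r R m N)
           + 4 * window_energy T (trig_part \<zeta> D m N) + 2 * window_energy T (trig_part \<zeta> (\<lambda>n. d n * D n) m N)
           + 2 * window_energy T (trig_part \<omega> (\<lambda>n. c n * C n) m N)"
proof -
  note cont = continuous_on_trig_part continuous_on_decay_part
  have u1: "window_energy T (trig_part \<omega> C m N) / 2 - 2 * window_energy T (decay_part r R m N)
              - 2 * window_energy T (trig_part \<zeta> D m N) \<le> window_energy T (u1_part \<omega> \<zeta> r C D R m N)"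
           "window_energy T (u1_part \<omega> \<zeta> r C D R m N) \<le> 2 * window_energy T (trig_part \<omega> C m N)
              + 4 * window_energy T (decay_part r R m N) + 4 * window_energy T (trig_part \<zeta> D m N)"
    unfolding u1_part_eq by (intro window_energy_add3_ge window_energy_add3_le T cont)+
  have u2: "window_energy T (trig_part \<zeta> (\<lambda>n. d n * D n) m N) / 2
              - window_energy T (trig_part \<omega> (\<lambda>n. c n * C n) m N) \<le> window_energy T (u2_part \<omega> \<zeta> c d C D m N)"
           "window_energy T (u2_part \<omega> \<zeta> c d C D m N) \<le> 2 * window_energy T (trig_part \<zeta> (\<lambda>n. d n * D n) m N)
              + 2 * window_energy T (trig_part \<omega> (\<lambda>n. c n * C n) m N)"
    unfolding u2_part_eq
    using window_energy_add_le[OF T zero_less_one cont(1) cont(1)] window_energy_add_ge[OF T cont(1) cont(1)]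
    by simp_all
  from u1 u2 show "window_energy T (trig_part \<omega> C m N) / 2 - 2 * window_energy T (decay_part r R m N)
           - 2 * window_energy T (trig_part \<zeta> D m N) + window_energy T (trig_part \<zeta> (\<lambda>n. d n * D n) m N) / 2
           - window_energy T (trig_part \<omega> (\<lambda>n. c n * C n) m N)
         \<le> window_energy T (u1_part \<omega> \<zeta> r C D R m N) + window_energy T (u2_part \<omega> \<zeta> c d C D m N)"
    by linarith
  from u1 u2 show "window_energy T (u1_part \<omega> \<zeta> r C D R m N) + window_energy T (u2_part \<omega> \<zeta> c d C D m N)
         \<le> 2 * window_energy T (trig_part \<omega> C m N) + 4 * window_energy T (decay_part r R m N)
           + 4 * window_energy T (trig_part \<zeta> D m N) + 2 * window_energy T (trig_part \<zeta> (\<lambda>n. d n * D n) m N)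
           + 2 * window_energy T (trig_part \<omega> (\<lambda>n. c n * C n) m N)"
    by linarith
qed

text \<open>The unperturbed parts \<open>C\<^sub>n exp(i\<omega>\<^sub>nt)\<close> of \<open>u\<^sub>1\<close> and \<open>d\<^sub>n D\<^sub>n exp(i\<zeta>\<^sub>nt)\<close> of \<open>u\<^sub>2\<close> carry
  energy at least \<open>2\<eta>\<close> times their weighted masses, while each of the three coupling terms costs
  at most a fixed fraction of \<open>\<eta>\<close> times these masses.\<close>
lemma partial_energy_lower:
  fixes \<omega> \<zeta> c d C D :: "nat \<Rightarrow> complex" and r R :: "nat \<Rightarrow> real"
  assumes T: "T > 0" and g: "g > 0" and eta: "0 < \<eta>"
    and sep: "\<And>n. m \<le> n \<Longrightarrow> separated_at g Y \<omega> n \<and> separated_at g Y \<zeta> n"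
    and A: "4 * ((pi/T)^2 + 4 * Y^2) \<le> (1 - \<eta>) * g^2"
    and Im\<omega>: "\<And>n. m \<le> n \<Longrightarrow> 0 \<le> Im (\<omega> n)"
    and c: "\<And>n. m \<le> n \<Longrightarrow> (cmod (c n))^2 \<le> \<eta> / 16"
    and D: "\<And>n. m \<le> n \<Longrightarrow> (cmod (D n))^2 \<le> \<eta> / 32 * (cmod (d n * D n))^2"
    and decay: "window_energy T (decay_part r R m N)
                  \<le> \<eta> / 8 * (weighted_mass T \<omega> C m N + weighted_mass T \<zeta> (\<lambda>n. d n * D n) m N)"
  shows "\<eta> / 2 * ((pi/T) / (2 * ((pi/T)^2 + 4 * Y^2)))
           * (\<Sum>n\<in>{m..<N}. (1 + exp (-2 * Im (\<omega> n) * T)) * ((cmod (C n))^2 + (cmod (d n * D n))^2))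
         \<le> window_energy T (u1_part \<omega> \<zeta> r C D R m N) + window_energy T (u2_part \<omega> \<zeta> c d C D m N)"
proof -
  define SP where "SP = weighted_mass T \<omega> C m N"
  define SU where "SU = weighted_mass T \<zeta> (\<lambda>n. d n * D n) m N"
  have sep\<omega>: "\<And>n. m \<le> n \<Longrightarrow> separated_at g Y \<omega> n" and sep\<zeta>: "\<And>n. m \<le> n \<Longrightarrow> separated_at g Y \<zeta> n"
    using sep by auto
  have cC: "(cmod (c n * C n))^2 \<le> \<eta> / 16 * (cmod (C n))^2" if "m \<le> n" for n
    using mult_right_mono[OF c[OF that], of "(cmod (C n))^2"] by (simp add: norm_mult power_mult_distrib)
  have "2 * \<eta> * SP \<le> window_energy T (trig_part \<omega> C m N)"
    unfolding SP_def by (rule trig_part_energy_bounds(1)[OF T g eta sep\<omega> A])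
  moreover have "2 * \<eta> * SU \<le> window_energy T (trig_part \<zeta> (\<lambda>n. d n * D n) m N)"
    unfolding SU_def by (rule trig_part_energy_bounds(1)[OF T g eta sep\<zeta> A])
  moreover have "window_energy T (trig_part \<zeta> D m N) \<le> 4 * (\<eta> / 32) * SU"
    unfolding SU_def using D by (intro window_energy_trig_part_le_coeff[OF T g eta sep\<zeta> A])
  moreover have "window_energy T (trig_part \<omega> (\<lambda>n. c n * C n) m N) \<le> 4 * (\<eta> / 16) * SP"
    unfolding SP_def using cC by (intro window_energy_trig_part_le_coeff[OF T g eta sep\<omega> A])
  moreover have "\<eta> / 2 * (SP + SU) = \<eta> * SP - \<eta> / 8 * (SP + SU) * 2 - 2 * (4 * (\<eta> / 32) * SU)
                   + \<eta> * SU - 4 * (\<eta> / 16) * SP"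
    "2 * \<eta> * SP = 2 * (\<eta> * SP)" "2 * \<eta> * SU = 2 * (\<eta> * SU)"
    by (simp_all add: field_simps)
  ultimately have energy: "\<eta> / 2 * (SP + SU)
                   \<le> window_energy T (u1_part \<omega> \<zeta> r C D R m N) + window_energy T (u2_part \<omega> \<zeta> c d C D m N)"
    using partial_energy_decompose(1)[OF T, where \<omega> = \<omega> and \<zeta> = \<zeta> and c = c and d = d and C = C and D = D and r = r and R = R and m = m and N = N] decay
    unfolding SP_def[symmetric] SU_def[symmetric] by linarith
  have "(pi/T) / (2 * ((pi/T)^2 + 4 * Y^2))
          * (\<Sum>n\<in>{m..<N}. (1 + exp (-2 * Im (\<omega> n) * T)) * ((cmod (C n))^2 + (cmod (d n * D n))^2))
        \<le> SP + SU"
    unfolding SP_def SU_def using sep Im\<omega> by (intro weighted_mass_add_ge T) (auto simp: separated_at_def)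
  from order_trans[OF mult_left_mono[OF this, of "\<eta> / 2"] energy] eta show ?thesis
    by (simp add: mult.assoc)
qed

lemma partial_energy_upper:
  fixes \<omega> \<zeta> c d C D :: "nat \<Rightarrow> complex" and r R :: "nat \<Rightarrow> real"
  assumes T: "T > 0" and g: "g > 0" and eta: "0 < \<eta>" "\<eta> \<le> 1"
    and sep: "\<And>n. m \<le> n \<Longrightarrow> separated_at g Y \<omega> n \<and> separated_at g Y \<zeta> n"
    and A: "4 * ((pi/T)^2 + 4 * Y^2) \<le> (1 - \<eta>) * g^2"
    and c: "\<And>n. m \<le> n \<Longrightarrow> (cmod (c n))^2 \<le> \<eta> / 16"
    and D: "\<And>n. m \<le> n \<Longrightarrow> (cmod (D n))^2 \<le> \<eta> / 32 * (cmod (d n * D n))^2"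
    and decay: "window_energy T (decay_part r R m N)
                  \<le> \<eta> / 8 * (weighted_mass T \<omega> C m N + weighted_mass T \<zeta> (\<lambda>n. d n * D n) m N)"
  shows "window_energy T (u1_part \<omega> \<zeta> r C D R m N) + window_energy T (u2_part \<omega> \<zeta> c d C D m N)
         \<le> 9 * ((pi/T) * (1 + exp (2 * Y * T)) / (pi/T)^2)
             * (\<Sum>n\<in>{m..<N}. (cmod (C n))^2 + (cmod (d n * D n))^2)"
proof -
  define K where "K = (pi/T) * (1 + exp (2 * Y * T)) / (pi/T)^2"
  define SP where "SP = weighted_mass T \<omega> C m N"
  define SU where "SU = weighted_mass T \<zeta> (\<lambda>n. d n * D n) m N"
  have sep\<omega>: "\<And>n. m \<le> n \<Longrightarrow> separated_at g Y \<omega> n" and sep\<zeta>: "\<And>n. m \<le> n \<Longrightarrow> separated_at g Y \<zeta> n"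
    using sep by auto
  have cC: "(cmod (c n * C n))^2 \<le> \<eta> / 16 * (cmod (C n))^2" if "m \<le> n" for n
    using mult_right_mono[OF c[OF that], of "(cmod (C n))^2"] by (simp add: norm_mult power_mult_distrib)
  have "window_energy T (trig_part \<omega> C m N) \<le> 4 * SP"
    unfolding SP_def by (rule trig_part_energy_bounds(2)[OF T g eta(1) sep\<omega> A])
  moreover have "window_energy T (trig_part \<zeta> (\<lambda>n. d n * D n) m N) \<le> 4 * SU"
    unfolding SU_def by (rule trig_part_energy_bounds(2)[OF T g eta(1) sep\<zeta> A])
  moreover have "window_energy T (trig_part \<zeta> D m N) \<le> 4 * (\<eta> / 32) * SU"
    unfolding SU_def using D by (intro window_energy_trig_part_le_coeff[OF T g eta(1) sep\<zeta> A])
  moreover have "window_energy T (trig_part \<omega> (\<lambda>n. c n * C n) m N) \<le> 4 * (\<eta> / 16) * SP"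
    unfolding SP_def using cC by (intro window_energy_trig_part_le_coeff[OF T g eta(1) sep\<omega> A])
  moreover have "0 \<le> SP" "0 \<le> SU" "\<eta> * SP \<le> SP" "\<eta> * SU \<le> SU"
    using weighted_mass_nonneg[OF T] eta by (auto simp: SP_def SU_def mult_left_le_one_le)
  moreover have "4 * (\<eta> / 8 * (SP + SU)) + 4 * (4 * (\<eta> / 32) * SU) + 2 * (4 * (\<eta> / 16) * SP)
                 = \<eta> * SP + \<eta> * SU"
    by (simp add: field_simps)
  ultimately have "window_energy T (u1_part \<omega> \<zeta> r C D R m N) + window_energy T (u2_part \<omega> \<zeta> c d C D m N)
                   \<le> 9 * SP + 9 * SU"
    using partial_energy_decompose(2)[OF T, where \<omega> = \<omega> and \<zeta> = \<zeta> and c = c and d = d and C = C and D = D and r = r and R = R and m = m and N = N] decay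
    unfolding SP_def[symmetric] SU_def[symmetric] by linarith
  also have "\<dots> \<le> 9 * (K * (\<Sum>n\<in>{m..<N}. (cmod (C n))^2)) + 9 * (K * (\<Sum>n\<in>{m..<N}. (cmod (d n * D n))^2))"
    unfolding SP_def SU_def K_def using sep
    by (intro add_mono mult_left_mono weighted_mass_le T; force simp: separated_at_def)
  also have "\<dots> = 9 * K * (\<Sum>n\<in>{m..<N}. (cmod (C n))^2 + (cmod (d n * D n))^2)"
    by (simp add: sum.distrib algebra_simps)
  finally show ?thesis by (simp only: K_def)
qed

section \<open>Passage to the limit\<close>

text \<open>Read \<open>E m n\<close> as the squared seminorm of the block from \<open>m\<close> to \<open>n\<close>: the relaxed triangle inequality,
  valid for every \<open>\<delta> > 0\<close>, replaces Minkowski's inequality.\<close>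

lemma convergent_of_relaxed_triangle:
  fixes E :: "nat \<Rightarrow> nat \<Rightarrow> real"
  assumes relaxed: "\<And>m n \<delta>. n0 \<le> m \<Longrightarrow> m \<le> n \<Longrightarrow> \<delta> > 0 \<Longrightarrow>
             E n0 n \<le> (1 + \<delta>) * E n0 m + (1 + 1 / \<delta>) * E m n \<and>
             E n0 m \<le> (1 + \<delta>) * E n0 n + (1 + 1 / \<delta>) * E m n"
    and tail: "\<And>e. e > 0 \<Longrightarrow> \<exists>M. \<forall>m\<ge>M. \<forall>n\<ge>m. E m n < e"
  shows "convergent (\<lambda>N. E n0 N)"
proof -
  obtain M1 where M1: "\<And>m n. M1 \<le> m \<Longrightarrow> m \<le> n \<Longrightarrow> E m n < 1"
    using tail[of 1] by auto
  define M where "M = max M1 n0"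
  define K where "K = 2 * \<bar>E n0 M\<bar> + 2"
  have K: "E n0 n \<le> K" if "M \<le> n" for n
  proof -
    have "E n0 n \<le> 2 * E n0 M + 2 * E M n" "E M n < 1"
      using relaxed[of M n 1] M1[of M n] that by (simp_all add: M_def)
    then show ?thesis using abs_ge_self[of "E n0 M"] unfolding K_def by linarith
  qed
  have "Cauchy (\<lambda>N. E n0 N)"
  proof (rule CauchyI)
    fix e :: real assume e: "e > 0"
    define \<delta> where "\<delta> = e / (2 * (K + 1))"
    have K0: "0 \<le> K" by (simp add: K_def)
    then have \<delta>: "\<delta> > 0" "\<delta> * K < e / 2"
      using e by (auto simp: \<delta>_def field_simps)
    define \<kappa> where "\<kappa> = 1 + 1 / \<delta>"
    have \<kappa>: "\<kappa> > 0" using \<delta> by (simp add: \<kappa>_def add_pos_pos)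
    then have "0 < e / (2 * \<kappa>)" using e by simp
    then obtain M2 where M2: "\<And>m n. M2 \<le> m \<Longrightarrow> m \<le> n \<Longrightarrow> E m n < e / (2 * \<kappa>)"
      using tail by blast
    have close: "\<bar>E n0 n - E n0 m\<bar> < e" if "max M M2 \<le> m" "m \<le> n" for m n
    proof -
      have "\<kappa> * E m n \<le> \<kappa> * (e / (2 * \<kappa>))"
        using M2[of m n] that \<kappa> by (intro mult_left_mono) auto
      also have "\<dots> = e / 2" using \<kappa> by simp
      finally have "(1 + 1 / \<delta>) * E m n \<le> e / 2" by (simp add: \<kappa>_def)
      moreover have "\<delta> * E n0 m \<le> \<delta> * K" "\<delta> * E n0 n \<le> \<delta> * K"
        using K[of m] K[of n] that \<delta> by (auto intro: mult_left_mono)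
      moreover have "n0 \<le> m" using that by (simp add: M_def)
      note relaxed[OF this that(2) \<delta>(1)]
      moreover have "(1 + \<delta>) * E n0 m = E n0 m + \<delta> * E n0 m" "(1 + \<delta>) * E n0 n = E n0 n + \<delta> * E n0 n"
        by (simp_all add: algebra_simps)
      ultimately show ?thesis using \<delta>(2) unfolding abs_less_iff by linarith
    qed
    show "\<exists>M'. \<forall>m\<ge>M'. \<forall>n\<ge>M'. norm (E n0 m - E n0 n) < e"
    proof (intro exI allI impI)
      fix m n assume "max M M2 \<le> m" "max M M2 \<le> n"
      then show "norm (E n0 m - E n0 n) < e"
        using close[of m n] close[of n m] by (cases "m \<le> n") (auto simp: abs_minus_commute)
    qed
  qed
  then show ?thesis by (simp add: Cauchy_convergent_iff)
qed

lemma limit_ge_of_relaxed_triangle: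
  fixes E :: "nat \<Rightarrow> nat \<Rightarrow> real" and w q :: "nat \<Rightarrow> real"
  assumes relaxed: "\<And>m n \<delta>. n0 \<le> m \<Longrightarrow> m \<le> n \<Longrightarrow> \<delta> > 0 \<Longrightarrow>
             E n0 n \<le> (1 + \<delta>) * E n0 m + (1 + 1 / \<delta>) * E m n \<and>
             E n0 m \<le> (1 + \<delta>) * E n0 n + (1 + 1 / \<delta>) * E m n"
    and lower: "\<And>N. c * (\<Sum>n\<in>{n0..<N}. w n) \<le> E n0 N"
    and upper: "\<And>m N. n0 \<le> m \<Longrightarrow> E m N \<le> B * (\<Sum>n\<in>{m..<N}. q n)"
    and B: "B > 0" and q: "summable q" "\<And>n. 0 \<le> q n" and w: "summable (\<lambda>n. w (n + n0))"
  shows "\<exists>L. (\<lambda>N. E n0 N) \<longlonglongrightarrow> L \<and> c * (\<Sum>n. w (n + n0)) \<le> L"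
proof -
  have "\<exists>M. \<forall>m\<ge>M. \<forall>n\<ge>m. E m n < e" if e: "e > 0" for e
  proof -
    obtain M where M: "\<And>m n. M \<le> m \<Longrightarrow> norm (\<Sum>k\<in>{m..<n}. q k) < e / B"
      using q(1) e B unfolding summable_Cauchy by (metis divide_pos_pos)
    have "E m n < e" if "max M n0 \<le> m" for m n
    proof -
      have "E m n \<le> B * (\<Sum>k\<in>{m..<n}. q k)" using upper that by simp
      also have "\<dots> < B * (e / B)"
        using M[of m n] that B q(2) by (intro mult_strict_left_mono) (auto simp: sum_nonneg)
      finally show ?thesis using B by simp
    qed
    then show ?thesis by blast
  qed
  with relaxed obtain L where L: "(\<lambda>N. E n0 N) \<longlonglongrightarrow> L"
    using convergent_of_relaxed_triangle by (metis convergent_def)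
  have "(\<lambda>k. c * (\<Sum>n<k. w (n + n0))) \<longlonglongrightarrow> c * (\<Sum>n. w (n + n0))"
    by (intro tendsto_mult_left summable_LIMSEQ w)
  moreover have "(\<lambda>k. E n0 (k + n0)) \<longlonglongrightarrow> L"
    by (rule LIMSEQ_ignore_initial_segment[OF L])
  moreover have "c * (\<Sum>n<k. w (n + n0)) \<le> E n0 (k + n0)" for k
    using lower[of "k + n0"] sum.shift_bounds_nat_ivl[of w 0 n0 k] by (simp add: atLeast0LessThan)
  ultimately have "c * (\<Sum>n. w (n + n0)) \<le> L"
    by (intro LIMSEQ_le) auto
  with L show ?thesis by blast
qed

lemma window_energy_relaxed_triangle:
  assumes T: "T > 0" and d: "\<delta> > 0" and f: "continuous_on {0..T} f" and g: "continuous_on {0..T} g"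
    and h: "h = (\<lambda>t. f t + g t)"
  shows "window_energy T h \<le> (1 + \<delta>) * window_energy T f + (1 + 1 / \<delta>) * window_energy T g"
    and "window_energy T f \<le> (1 + \<delta>) * window_energy T h + (1 + 1 / \<delta>) * window_energy T g"
proof -
  show "window_energy T h \<le> (1 + \<delta>) * window_energy T f + (1 + 1 / \<delta>) * window_energy T g"
    unfolding h by (rule window_energy_add_le[OF T d f g])
  have "f = (\<lambda>t. h t + - g t)" by (simp add: h)
  then show "window_energy T f \<le> (1 + \<delta>) * window_energy T h + (1 + 1 / \<delta>) * window_energy T g"
    using window_energy_add_le[OF T d _ continuous_on_minus[OF g], of h] f g
    by (simp add: h window_energy_uminus continuous_on_add)
qed

lemma partial_energy_relaxed_triangle:
  fixes \<omega> \<zeta> c d C D :: "nat \<Rightarrow> complex" and r R :: "nat \<Rightarrow> real" and T :: real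
  defines "E \<equiv> \<lambda>m N. window_energy T (u1_part \<omega> \<zeta> r C D R m N) + window_energy T (u2_part \<omega> \<zeta> c d C D m N)"
  assumes T: "T > 0" and "k \<le> m" "m \<le> n" and \<delta>: "\<delta> > 0"
  shows "E k n \<le> (1 + \<delta>) * E k m + (1 + 1 / \<delta>) * E m n \<and> E k m \<le> (1 + \<delta>) * E k n + (1 + 1 / \<delta>) * E m n"
proof -
  note cont = continuous_on_u1_part continuous_on_u2_part
  have "u1_part \<omega> \<zeta> r C D R k n = (\<lambda>t. u1_part \<omega> \<zeta> r C D R k m t + u1_part \<omega> \<zeta> r C D R m n t)"
       "u2_part \<omega> \<zeta> c d C D k n = (\<lambda>t. u2_part \<omega> \<zeta> c d C D k m t + u2_part \<omega> \<zeta> c d C D m n t)"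
    using assms(3,4) by (simp_all add: fun_eq_iff u1_part_split[of k m n] u2_part_split[of k m n])
  from window_energy_relaxed_triangle[OF T \<delta> cont(1) cont(1) this(1)]
       window_energy_relaxed_triangle[OF T \<delta> cont(2) cont(2) this(2)]
  show ?thesis unfolding E_def distrib_left by linarith
qed

lemma partial_energy_bounds:
  fixes \<omega> \<zeta> c d C D :: "nat \<Rightarrow> complex" and r R z :: "nat \<Rightarrow> real"
  assumes T: "T > 0" and g: "g > 0" and eta: "0 < \<eta>" "\<eta> \<le> 1" and s: "s > 0" and \<mu>: "\<mu> \<ge> 0"
    and A: "4 * ((pi/T)^2 + 4 * Y^2) \<le> (1 - \<eta>) * g^2"
    and thr: "\<And>n. n0 \<le> n \<Longrightarrow> separated_at g Y \<omega> n \<and> separated_at g Y \<zeta> n \<and> 0 \<le> Im (\<omega> n)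
                 \<and> r n \<le> - s \<and> (cmod (c n))^2 \<le> \<eta> / 16 \<and> 32 / \<eta> \<le> (cmod (d n))^2"
    and tail: "\<And>m N. n0 \<le> m \<Longrightarrow> \<mu>^2 * (\<Sum>n\<in>{m..<N}. (z n)^2) * (2 * (1 + Y^2 / s^2)) \<le> \<eta> / 8"
    and R: "\<And>n. n0 \<le> n \<Longrightarrow> \<bar>R n\<bar> \<le> \<mu> * z n * sqrt ((cmod (C n))^2 + (cmod (d n * D n))^2)"
    and z: "\<And>n. 0 \<le> z n"
    and m: "n0 \<le> m"
  shows "\<eta> / 2 * ((pi/T) / (2 * ((pi/T)^2 + 4 * Y^2)))
           * (\<Sum>n\<in>{m..<N}. (1 + exp (-2 * Im (\<omega> n) * T)) * ((cmod (C n))^2 + (cmod (d n * D n))^2))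
         \<le> window_energy T (u1_part \<omega> \<zeta> r C D R m N) + window_energy T (u2_part \<omega> \<zeta> c d C D m N)"
    and "window_energy T (u1_part \<omega> \<zeta> r C D R m N) + window_energy T (u2_part \<omega> \<zeta> c d C D m N)
         \<le> 9 * ((pi/T) * (1 + exp (2 * Y * T)) / (pi/T)^2)
             * (\<Sum>n\<in>{m..<N}. (cmod (C n))^2 + (cmod (d n * D n))^2)"
proof -
  have D: "(cmod (D n))^2 \<le> \<eta> / 32 * (cmod (d n * D n))^2" if "m \<le> n" for n
  proof -
    have "32 / \<eta> \<le> (cmod (d n))^2" using thr[of n] m that by simp
    from mult_right_mono[OF this, of "(cmod (D n))^2"] show ?thesis
      using eta by (simp add: norm_mult power_mult_distrib field_simps)
  qed
  have decay: "window_energy T (decay_part r R m N)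
        \<le> \<eta> / 8 * (weighted_mass T \<omega> C m N + weighted_mass T \<zeta> (\<lambda>n. d n * D n) m N)"
  proof (rule window_energy_decay_part_small[OF T s _ _ \<mu> z _ tail])
    fix n assume "m \<le> n"
    with m thr[of n] R[of n]
    show "r n \<le> - s" "\<bar>R n\<bar> \<le> \<mu> * z n * sqrt ((cmod (C n))^2 + (cmod (d n * D n))^2)"
      "\<bar>Im (\<omega> n)\<bar> \<le> Y \<and> \<bar>Im (\<zeta> n)\<bar> \<le> Y"
      by (auto simp: separated_at_def)
  qed (rule m)
  have "separated_at g Y \<omega> n \<and> separated_at g Y \<zeta> n" "0 \<le> Im (\<omega> n)" "(cmod (c n))^2 \<le> \<eta> / 16"
    if "m \<le> n" for n
    using thr[of n] m that by auto
  from partial_energy_lower[OF T g eta(1) this(1) A this(2,3) D decay]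
       partial_energy_upper[OF T g eta this(1) A this(3) D decay]
  show "\<eta> / 2 * ((pi/T) / (2 * ((pi/T)^2 + 4 * Y^2)))
           * (\<Sum>n\<in>{m..<N}. (1 + exp (-2 * Im (\<omega> n) * T)) * ((cmod (C n))^2 + (cmod (d n * D n))^2))
         \<le> window_energy T (u1_part \<omega> \<zeta> r C D R m N) + window_energy T (u2_part \<omega> \<zeta> c d C D m N)"
    and "window_energy T (u1_part \<omega> \<zeta> r C D R m N) + window_energy T (u2_part \<omega> \<zeta> c d C D m N)
         \<le> 9 * ((pi/T) * (1 + exp (2 * Y * T)) / (pi/T)^2)
             * (\<Sum>n\<in>{m..<N}. (cmod (C n))^2 + (cmod (d n * D n))^2)"
    by auto
qed

lemma ingham_series_bound:
  fixes \<omega> \<zeta> c d C D :: "nat \<Rightarrow> complex" and r R z :: "nat \<Rightarrow> real"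
  assumes T: "T > 0" and g: "g > 0" and eta: "0 < \<eta>" "\<eta> \<le> 1" and s: "s > 0" and \<mu>: "\<mu> \<ge> 0"
    and A: "4 * ((pi/T)^2 + 4 * Y^2) \<le> (1 - \<eta>) * g^2"
    and thr: "\<And>n. n0 \<le> n \<Longrightarrow> separated_at g Y \<omega> n \<and> separated_at g Y \<zeta> n \<and> 0 \<le> Im (\<omega> n)
                 \<and> r n \<le> - s \<and> (cmod (c n))^2 \<le> \<eta> / 16 \<and> 32 / \<eta> \<le> (cmod (d n))^2"
    and tail: "\<And>m N. n0 \<le> m \<Longrightarrow> \<mu>^2 * (\<Sum>n\<in>{m..<N}. (z n)^2) * (2 * (1 + Y^2 / s^2)) \<le> \<eta> / 8"
    and R: "\<And>n. n0 \<le> n \<Longrightarrow> \<bar>R n\<bar> \<le> \<mu> * z n * sqrt ((cmod (C n))^2 + (cmod (d n * D n))^2)"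
    and z: "\<And>n. 0 \<le> z n"
    and q: "summable (\<lambda>n. (cmod (C n))^2 + (cmod (d n * D n))^2)"
  shows "\<exists>L. (\<lambda>N. integral {0..} (\<lambda>t. kfun T t *
                  ((cmod (u1_part \<omega> \<zeta> r C D R n0 N t))^2 + (cmod (u2_part \<omega> \<zeta> c d C D n0 N t))^2)))
              \<longlonglongrightarrow> L
           \<and> L \<ge> \<eta> / 2 * ((pi/T) / (2 * ((pi/T)^2 + 4 * Y^2)))
                  * (\<Sum>n. (1 + exp (-2 * Im (\<omega> (n + n0)) * T))
                          * ((cmod (C (n + n0)))^2 + (cmod (d (n + n0) * D (n + n0)))^2))"
proof -
  define E where "E m N = window_energy T (u1_part \<omega> \<zeta> r C D R m N)
                          + window_energy T (u2_part \<omega> \<zeta> c d C D m N)" for m N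
  define q' where "q' n = (cmod (C n))^2 + (cmod (d n * D n))^2" for n
  define w where "w n = (1 + exp (-2 * Im (\<omega> n) * T)) * q' n" for n
  have q': "summable q'" "\<And>n. 0 \<le> q' n"
    using q by (simp_all add: q'_def[abs_def])
  have w: "summable (\<lambda>n. w (n + n0))"
  proof (rule summable_comparison_test)
    show "summable (\<lambda>n. 2 * q' (n + n0))"
      using q' by (intro summable_mult summable_ignore_initial_segment)
    have "norm (w (n + n0)) \<le> 2 * q' (n + n0)" for n
    proof -
      have "1 + exp (-2 * Im (\<omega> (n + n0)) * T) \<le> 2" using thr[of "n + n0"] T by simp
      from mult_right_mono[OF this q'(2)] show ?thesis
        by (simp add: w_def q'_def add_nonneg_nonneg)
    qed
    then show "\<exists>N. \<forall>n\<ge>N. norm (w (n + n0)) \<le> 2 * q' (n + n0)" by blast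
  qed
  have relaxed: "E n0 n \<le> (1 + \<delta>) * E n0 m + (1 + 1 / \<delta>) * E m n
                 \<and> E n0 m \<le> (1 + \<delta>) * E n0 n + (1 + 1 / \<delta>) * E m n"
    if "n0 \<le> m" "m \<le> n" "\<delta> > 0" for m n \<delta>
    unfolding E_def using that by (rule partial_energy_relaxed_triangle[OF T])
  have lower: "\<eta> / 2 * ((pi/T) / (2 * ((pi/T)^2 + 4 * Y^2))) * (\<Sum>n\<in>{n0..<N}. w n) \<le> E n0 N" for N
    unfolding E_def w_def q'_def using thr tail R z order_refl
    by (rule partial_energy_bounds(1)[OF T g eta s \<mu> A])
  have upper: "E m N \<le> 9 * ((pi/T) * (1 + exp (2 * Y * T)) / (pi/T)^2) * (\<Sum>n\<in>{m..<N}. q' n)"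
    if "n0 \<le> m" for m N
    unfolding E_def q'_def using thr tail R z that
    by (rule partial_energy_bounds(2)[OF T g eta s \<mu> A])
  have "0 < 9 * ((pi/T) * (1 + exp (2 * Y * T)) / (pi/T)^2)"
    using T by (simp add: add_pos_pos)
  then obtain L where L: "(\<lambda>N. E n0 N) \<longlonglongrightarrow> L"
    and le: "\<eta> / 2 * ((pi/T) / (2 * ((pi/T)^2 + 4 * Y^2))) * (\<Sum>n. w (n + n0)) \<le> L"
    using limit_ge_of_relaxed_triangle[OF relaxed lower upper _ q' w] by blast
  have "(\<lambda>N. integral {0..} (\<lambda>t. kfun T t *
           ((cmod (u1_part \<omega> \<zeta> r C D R n0 N t))^2 + (cmod (u2_part \<omega> \<zeta> c d C D n0 N t))^2)))
        = (\<lambda>N. E n0 N)"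
    unfolding E_def by (intro ext integral_kfun_eq_window_energy T continuous_on_u1_part continuous_on_u2_part)
  with L le show ?thesis
    unfolding w_def q'_def by auto
qed

section \<open>Choice of the parameters and of the threshold index\<close>

lemma eventually_step_ge:
  fixes f :: "nat \<Rightarrow> real"
  assumes "Liminf sequentially (\<lambda>n. ereal (f (Suc n) - f n)) = ereal \<gamma>" and "g < \<gamma>"
  shows "eventually (\<lambda>n. g \<le> f (Suc n) - f n) sequentially"
proof -
  have "ereal \<gamma> \<le> Liminf sequentially (\<lambda>n. ereal (f (Suc n) - f n))"
    using assms(1) by simp
  then have "\<forall>y<ereal \<gamma>. eventually (\<lambda>n. y < ereal (f (Suc n) - f n)) sequentially"
    by (simp only: le_Liminf_iff)
  moreover have "ereal g < ereal \<gamma>" using assms(2) by simp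
  ultimately have "eventually (\<lambda>n. ereal g < ereal (f (Suc n) - f n)) sequentially"
    by blast
  then show ?thesis
    by (rule eventually_mono) simp
qed

lemma eventually_ge_of_step_ge:
  fixes f :: "nat \<Rightarrow> real"
  assumes "eventually (\<lambda>n. g \<le> f (Suc n) - f n) sequentially" and g: "g > 0"
  shows "eventually (\<lambda>n. B \<le> f n) sequentially"
proof -
  obtain N1 where N1: "\<And>n. N1 \<le> n \<Longrightarrow> g \<le> f (Suc n) - f n"
    using assms(1) by (auto simp: eventually_sequentially)
  define K where "K = N1 + nat \<lceil>(B - f N1) / g\<rceil>"
  have "B \<le> f n" if "K \<le> n" for n
  proof -
    have "g * (real n - real N1) \<le> f n - f N1"
      using that N1 by (intro diff_ge_of_step_ge[where m = N1]) (auto simp: K_def)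
    moreover have "(B - f N1) / g \<le> real n - real N1"
      using that unfolding K_def by linarith
    then have "B - f N1 \<le> g * (real n - real N1)"
      using g by (simp add: divide_le_eq mult.commute)
    ultimately show ?thesis by linarith
  qed
  then show ?thesis by (auto simp: eventually_sequentially)
qed

lemma eventually_separated_at:
  assumes gaps: "Liminf sequentially (\<lambda>n. ereal (Re (lam (Suc n)) - Re (lam n))) = ereal \<gamma>"
    and g: "0 < g" "g < \<gamma>" and Im: "(\<lambda>n. Im (lam n)) \<longlonglongrightarrow> a" and a: "\<bar>a\<bar> < Y"
  shows "eventually (separated_at g Y lam) sequentially"
proof -
  have step: "eventually (\<lambda>n. g \<le> Re (lam (Suc n)) - Re (lam n)) sequentially"
    using gaps g(2) by (rule eventually_step_ge)
  moreover have "eventually (\<lambda>n. g / 2 \<le> Re (lam n)) sequentially"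
    using step g(1) by (rule eventually_ge_of_step_ge)
  moreover have "eventually (\<lambda>n. \<bar>Im (lam n)\<bar> < Y) sequentially"
    using tendsto_rabs[OF Im] a by (rule order_tendstoD)
  ultimately show ?thesis
    unfolding separated_at_def by eventually_elim auto
qed

lemma eventually_coupling_small:
  assumes big: "\<And>B. eventually (\<lambda>n. B \<le> Re (w n)) sequentially"
    and c: "\<And>n. 1 \<le> n \<Longrightarrow> cmod (c n) \<le> M / cmod (w n)" and M: "M > 0" and \<kappa>: "\<kappa> > 0"
  shows "eventually (\<lambda>n. (cmod (c n))^2 \<le> \<kappa>) sequentially"
  using big[of "M / sqrt \<kappa>"] eventually_ge_at_top[of 1]
proof eventually_elim
  case (elim n)
  then have w: "M / sqrt \<kappa> \<le> cmod (w n)"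
    using complex_Re_le_cmod order_trans by blast
  moreover have "0 < M / sqrt \<kappa>" using M \<kappa> by simp
  ultimately have "M / cmod (w n) \<le> M / (M / sqrt \<kappa>)"
    using M by (intro divide_left_mono mult_pos_pos) auto
  then have "cmod (c n) \<le> M / (M / sqrt \<kappa>)"
    using c[OF elim(2)] by linarith
  then have "cmod (c n) \<le> sqrt \<kappa>" using M by simp
  then show ?case
    using \<kappa> by (metis norm_ge_zero power_mono real_sqrt_pow2 less_imp_le)
qed

lemma eventually_coupling_large:
  assumes big: "\<And>B. eventually (\<lambda>n. B \<le> Re (z n)) sequentially"
    and d: "\<And>n. 1 \<le> n \<Longrightarrow> c1 * cmod (z n) \<le> cmod (d n)" and c1: "c1 > 0"
  shows "eventually (\<lambda>n. K \<le> (cmod (d n))^2) sequentially"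
  using big[of "sqrt \<bar>K\<bar> / c1"] eventually_ge_at_top[of 1]
proof eventually_elim
  case (elim n)
  then have "sqrt \<bar>K\<bar> / c1 \<le> cmod (z n)"
    using complex_Re_le_cmod order_trans by blast
  then have "sqrt \<bar>K\<bar> \<le> cmod (d n)"
    using d[OF elim(2)] c1 by (simp add: divide_le_eq mult.commute)
  then have "(sqrt \<bar>K\<bar>)^2 \<le> (cmod (d n))^2" by (intro power_mono) auto
  then show ?case by simp
qed

lemma eventually_tail_small:
  assumes "\<nu> > 1/2" and "e > 0"
  shows "\<exists>N0. \<forall>m\<ge>N0. \<forall>N. (\<Sum>n\<in>{m..<N}. (real n powr (-\<nu>))^2) < e"
proof -
  have "(real n powr (-\<nu>))^2 = real n powr (-2 * \<nu>)" for n
    by (simp add: power2_eq_square flip: powr_add)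
  moreover have "summable (\<lambda>n. real n powr (-2 * \<nu>))"
    using assms(1) by (subst summable_real_powr_iff) simp
  ultimately have "summable (\<lambda>n. (real n powr (-\<nu>))^2)" by simp
  then show ?thesis
    using assms(2) unfolding summable_Cauchy by (auto simp: sum_nonneg)
qed

text \<open>Taking \<open>g\<^sup>2 = \<gamma>\<^sup>2(1 - \<epsilon>/2)\<close> and \<open>Y\<^sup>2 = \<alpha>\<^sup>2(1 + \<epsilon>/2)\<close> leaves strict room \<open>g < \<gamma>\<close>, \<open>\<alpha> < Y\<close>
  for the eventual bounds, and \<open>(1 - \<eta>) g\<^sup>2 = \<gamma>\<^sup>2(1 - \<epsilon>) - 8\<alpha>\<^sup>2\<epsilon>\<close>.\<close>

lemma ingham_parameters:
  fixes \<gamma> \<alpha> \<epsilon> :: real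
  assumes \<gamma>: "\<gamma> > 0" and \<alpha>: "\<alpha> > 0"
    and \<epsilon>: "0 < \<epsilon>" "\<epsilon> < (\<gamma>^2 - 16 * \<alpha>^2) / (\<gamma>^2 + 16 * \<alpha>^2)"
  obtains g Y \<eta> where "0 < g" "g < \<gamma>" "\<alpha> < Y" "0 < \<eta>" "\<eta> \<le> 1"
    "\<And>T. T > 2 * pi / sqrt (\<gamma>^2 * (1 - \<epsilon>) - 16 * \<alpha>^2 * (1 + \<epsilon>)) \<Longrightarrow>
        T > 0 \<and> 4 * ((pi/T)^2 + 4 * Y^2) \<le> (1 - \<eta>) * g^2"
proof
  define X where "X = \<gamma>^2 * (1 - \<epsilon>) - 16 * \<alpha>^2 * (1 + \<epsilon>)"
  define g where "g = \<gamma> * sqrt (1 - \<epsilon>/2)"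
  define Y where "Y = \<alpha> * sqrt (1 + \<epsilon>/2)"
  define \<eta> where "\<eta> = 1 - (\<gamma>^2 * (1 - \<epsilon>) - 8 * \<alpha>^2 * \<epsilon>) / g^2"
  have "\<epsilon> * (\<gamma>^2 + 16 * \<alpha>^2) < \<gamma>^2 - 16 * \<alpha>^2"
    using \<epsilon> \<gamma> by (simp add: pos_less_divide_eq add_pos_nonneg)
  then have X: "X > 0" by (simp add: X_def algebra_simps)
  have \<alpha>\<epsilon>: "0 \<le> 16 * \<alpha>^2 * (1 + \<epsilon>)" "8 * \<alpha>^2 * \<epsilon> \<le> 16 * \<alpha>^2 * (1 + \<epsilon>)"
    using \<epsilon>(1) by (simp_all add: algebra_simps)
  then have "0 < \<gamma>^2 * (1 - \<epsilon>)" using X unfolding X_def by linarith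
  then have \<epsilon>1: "\<epsilon> < 1" by (simp add: zero_less_mult_iff)
  have g2: "g^2 = \<gamma>^2 * (1 - \<epsilon>/2)" and Y2: "Y^2 = \<alpha>^2 * (1 + \<epsilon>/2)"
    using \<epsilon> \<epsilon>1 by (simp_all add: g_def Y_def power_mult_distrib)
  show "0 < g" "g < \<gamma>" "\<alpha> < Y"
    using \<gamma> \<alpha> \<epsilon> \<epsilon>1 by (simp_all add: g_def Y_def real_sqrt_less_iff)
  then have "g^2 > 0" by simp
  have "\<gamma>^2 * (1 - \<epsilon>) - 8 * \<alpha>^2 * \<epsilon> < g^2"
    using \<epsilon>(1) \<gamma> \<alpha> unfolding g2 by (simp add: algebra_simps add_pos_pos)
  then show "0 < \<eta>"
    using \<open>g^2 > 0\<close> by (simp add: \<eta>_def)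
  have "0 \<le> \<gamma>^2 * (1 - \<epsilon>) - 8 * \<alpha>^2 * \<epsilon>"
    using X \<alpha>\<epsilon>(2) unfolding X_def by linarith
  then show "\<eta> \<le> 1"
    using \<open>g^2 > 0\<close> by (simp add: \<eta>_def)
  fix T assume T: "T > 2 * pi / sqrt (\<gamma>^2 * (1 - \<epsilon>) - 16 * \<alpha>^2 * (1 + \<epsilon>))"
  then have "T > 2 * pi / sqrt X" by (simp add: X_def)
  moreover have "0 < 2 * pi / sqrt X" using X by simp
  ultimately have T0: "T > 0" and "2 * pi < T * sqrt X"
    using X by (linarith, auto simp: divide_less_eq)
  then have "(2 * pi)^2 < (T * sqrt X)^2"
    by (intro power_strict_mono) auto
  then have "4 * (pi/T)^2 < X"
    using X T0 by (simp add: power_mult_distrib power_divide divide_less_eq mult.commute)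
  moreover have "(1 - \<eta>) * g^2 = \<gamma>^2 * (1 - \<epsilon>) - 8 * \<alpha>^2 * \<epsilon>"
    using \<open>g^2 > 0\<close> by (simp add: \<eta>_def)
  ultimately show "T > 0 \<and> 4 * ((pi/T)^2 + 4 * Y^2) \<le> (1 - \<eta>) * g^2"
    using T0 unfolding X_def Y2 by (simp add: algebra_simps)
qed

lemma ingham_threshold:
  fixes \<omega> \<zeta> c d :: "nat \<Rightarrow> complex" and r :: "nat \<Rightarrow> real"
  assumes H1a: "Liminf sequentially (\<lambda>n. ereal (Re (\<omega> (Suc n)) - Re (\<omega> n))) = ereal \<gamma>"
    and H1b: "Liminf sequentially (\<lambda>n. ereal (Re (\<zeta> (Suc n)) - Re (\<zeta> n))) = ereal \<gamma>"
    and H2a: "(\<lambda>n. Im (\<omega> n)) \<longlonglongrightarrow> \<alpha>" and H2b: "r \<longlonglongrightarrow> chi" and H2c: "(\<lambda>n. Im (\<zeta> n)) \<longlonglongrightarrow> 0"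
    and c: "\<And>n. 1 \<le> n \<Longrightarrow> cmod (c n) \<le> M / cmod (\<omega> n)"
    and d: "\<And>n. 1 \<le> n \<Longrightarrow> c1 * cmod (\<zeta> n) \<le> cmod (d n)"
    and M: "M > 0" and c1: "c1 > 0" and \<alpha>: "\<alpha> > 0" and s: "chi < - s"
    and g: "0 < g" "g < \<gamma>" and Y: "\<alpha> < Y" and \<eta>: "\<eta> > 0" and \<nu>: "\<nu> > 1/2" and G: "G \<ge> 0"
  obtains n0 where "n' < n0"
    and "\<And>n. n0 \<le> n \<Longrightarrow> separated_at g Y \<omega> n \<and> separated_at g Y \<zeta> n \<and> 0 \<le> Im (\<omega> n)
                 \<and> r n \<le> - s \<and> (cmod (c n))^2 \<le> \<eta> / 16 \<and> 32 / \<eta> \<le> (cmod (d n))^2"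
    and "\<And>m N. n0 \<le> m \<Longrightarrow> \<mu>^2 * (\<Sum>n\<in>{m..<N}. (real n powr (-\<nu>))^2) * G \<le> \<eta> / 8"
proof -
  have big: "eventually (\<lambda>n. B \<le> Re (lam n)) sequentially"
    if "Liminf sequentially (\<lambda>n. ereal (Re (lam (Suc n)) - Re (lam n))) = ereal \<gamma>" for lam B
    using eventually_step_ge[OF that g(2)] g(1) by (rule eventually_ge_of_step_ge)
  have "eventually (\<lambda>n. separated_at g Y \<omega> n \<and> separated_at g Y \<zeta> n \<and> 0 \<le> Im (\<omega> n)
          \<and> r n \<le> - s \<and> (cmod (c n))^2 \<le> \<eta> / 16 \<and> 32 / \<eta> \<le> (cmod (d n))^2) sequentially"
  proof (intro eventually_conj)
    show "eventually (separated_at g Y \<omega>) sequentially"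
      using H1a g H2a Y \<alpha> by (intro eventually_separated_at) auto
    show "eventually (separated_at g Y \<zeta>) sequentially"
      using H1b g H2c Y \<alpha> by (intro eventually_separated_at) auto
    show "eventually (\<lambda>n. 0 \<le> Im (\<omega> n)) sequentially"
      using order_tendstoD(1)[OF H2a \<alpha>] by (rule eventually_mono) simp
    show "eventually (\<lambda>n. r n \<le> - s) sequentially"
      using order_tendstoD(2)[OF H2b s] by (rule eventually_mono) simp
    show "eventually (\<lambda>n. (cmod (c n))^2 \<le> \<eta> / 16) sequentially"
      using big[OF H1a] c M \<eta> by (intro eventually_coupling_small) auto
    show "eventually (\<lambda>n. 32 / \<eta> \<le> (cmod (d n))^2) sequentially"
      using big[OF H1b] d c1 by (rule eventually_coupling_large)
  qed
  then obtain N1 where N1: "\<And>n. N1 \<le> n \<Longrightarrow> separated_at g Y \<omega> n \<and> separated_at g Y \<zeta> n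
          \<and> 0 \<le> Im (\<omega> n) \<and> r n \<le> - s \<and> (cmod (c n))^2 \<le> \<eta> / 16 \<and> 32 / \<eta> \<le> (cmod (d n))^2"
    by (auto simp: eventually_sequentially)
  define K where "K = \<mu>^2 * G"
  have K: "K \<ge> 0" using G by (simp add: K_def)
  obtain N2 where N2: "\<And>m N. N2 \<le> m \<Longrightarrow> (\<Sum>n\<in>{m..<N}. (real n powr (-\<nu>))^2) < \<eta> / (8 * (K + 1))"
    using eventually_tail_small[OF \<nu>, of "\<eta> / (8 * (K + 1))"] \<eta> K by (auto intro: divide_pos_pos)
  show ?thesis
  proof
    show "n' < max (max N1 N2) (Suc n')" by simp
    show "separated_at g Y \<omega> n \<and> separated_at g Y \<zeta> n \<and> 0 \<le> Im (\<omega> n)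
            \<and> r n \<le> - s \<and> (cmod (c n))^2 \<le> \<eta> / 16 \<and> 32 / \<eta> \<le> (cmod (d n))^2"
      if "max (max N1 N2) (Suc n') \<le> n" for n
      using N1 that by simp
    fix m N assume "max (max N1 N2) (Suc n') \<le> m"
    then have "K * (\<Sum>n\<in>{m..<N}. (real n powr (-\<nu>))^2) \<le> K * (\<eta> / (8 * (K + 1)))"
      using N2[of m N] K by (intro mult_left_mono) auto
    also have "\<dots> \<le> \<eta> / 8"
      using K \<eta> by (simp add: field_simps)
    finally show "\<mu>^2 * (\<Sum>n\<in>{m..<N}. (real n powr (-\<nu>))^2) * G \<le> \<eta> / 8"
      by (simp add: K_def ac_simps)
  qed
qed

theorem theorem5p9:
  fixes \<omega> \<zeta> c d :: "nat \<Rightarrow> complex" and r :: "nat \<Rightarrow> real"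
    and \<gamma> \<alpha> chi \<mu> \<nu> M c1 c2 :: real and n' :: nat
  assumes gpos: "\<gamma> > 0" and apos: "\<alpha> > 0" and chineg: "chi < 0"
    and mupos: "\<mu> > 0" and nu: "\<nu> > 1/2" and Mpos: "M > 0"
    and c1pos: "0 < c1" and c12: "c1 \<le> c2"
    and H1a: "Liminf sequentially (\<lambda>n. ereal (Re (\<omega> (Suc n)) - Re (\<omega> n))) = ereal \<gamma>"
    and H1b: "Liminf sequentially (\<lambda>n. ereal (Re (\<zeta> (Suc n)) - Re (\<zeta> n))) = ereal \<gamma>"
    and H2a: "(\<lambda>n. Im (\<omega> n)) \<longlonglongrightarrow> \<alpha>"
    and H2b: "r \<longlonglongrightarrow> chi"
    and H2c: "(\<lambda>n. Im (\<zeta> n)) \<longlonglongrightarrow> 0"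
    and H3: "\<And>n. n \<ge> 1 \<Longrightarrow> \<omega> n \<noteq> 0 \<and> \<zeta> n \<noteq> 0
               \<and> c1 * cmod (\<zeta> n) \<le> cmod (d n) \<and> cmod (d n) \<le> c2 * cmod (\<zeta> n)
               \<and> cmod (c n) \<le> M / cmod (\<omega> n)"
    and gamma_big: "\<gamma> > 4 * \<alpha>"
  shows "\<forall>\<epsilon>. 0 < \<epsilon> \<and> \<epsilon> < (\<gamma>\<^sup>2 - 16 * \<alpha>\<^sup>2) / (\<gamma>\<^sup>2 + 16 * \<alpha>\<^sup>2) \<longrightarrow>
     (\<exists>n0::nat. n0 \<ge> 1 \<and>
       (\<forall>T. T > 2 * pi / sqrt (\<gamma>\<^sup>2 * (1 - \<epsilon>) - 16 * \<alpha>\<^sup>2 * (1 + \<epsilon>)) \<longrightarrow>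
         (\<exists>cT > 0. \<forall>(C::nat \<Rightarrow> complex) (D::nat \<Rightarrow> complex) (R::nat \<Rightarrow> real).
            (\<forall>n\<ge>max 1 n'. \<bar>R n\<bar> \<le> \<mu> * real n powr (-\<nu>) * sqrt ((cmod (C n))\<^sup>2 + (cmod (d n * D n))\<^sup>2)) \<longrightarrow>
            (\<forall>n. 1 \<le> n \<and> n \<le> n' \<longrightarrow> \<bar>R n\<bar> \<le> \<mu> * sqrt ((cmod (C n))\<^sup>2 + (cmod (d n * D n))\<^sup>2)) \<longrightarrow>
            summable (\<lambda>n. (cmod (C (n + 1)))\<^sup>2 + (cmod (d (n + 1) * D (n + 1)))\<^sup>2) \<longrightarrow>
            (\<exists>L. (\<lambda>N. integral {0..} (\<lambda>t. kfun T t *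
                    ((cmod (u1_part \<omega> \<zeta> r C D R n0 N t))\<^sup>2
                     + (cmod (u2_part \<omega> \<zeta> c d C D n0 N t))\<^sup>2))) \<longlonglongrightarrow> L
                 \<and> L \<ge> cT * (\<Sum>n. (1 + exp (- 2 * Im (\<omega> (n + n0)) * T))
                          * ((cmod (C (n + n0)))\<^sup>2 + (cmod (d (n + n0) * D (n + n0)))\<^sup>2))))))"
proof (intro allI impI, goal_cases)
  case (1 \<epsilon>)
  then obtain g Y \<eta> where g: "0 < g" "g < \<gamma>" and Y: "\<alpha> < Y" and \<eta>: "0 < \<eta>" "\<eta> \<le> 1"
    and A: "\<And>T. T > 2 * pi / sqrt (\<gamma>\<^sup>2 * (1 - \<epsilon>) - 16 * \<alpha>\<^sup>2 * (1 + \<epsilon>)) \<Longrightarrow>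
              T > 0 \<and> 4 * ((pi/T)^2 + 4 * Y^2) \<le> (1 - \<eta>) * g^2"
    using ingham_parameters[OF gpos apos] by blast
  define s where "s = - chi / 2"
  have s: "0 < s" "chi < - s" and G: "0 \<le> 2 * (1 + Y^2 / s^2)"
    using chineg by (simp_all add: s_def add_nonneg_nonneg)
  have c: "\<And>n. 1 \<le> n \<Longrightarrow> cmod (c n) \<le> M / cmod (\<omega> n)"
    and d: "\<And>n. 1 \<le> n \<Longrightarrow> c1 * cmod (\<zeta> n) \<le> cmod (d n)"
    using H3 by auto
  obtain n0 where n0: "n' < n0"
    and thr: "\<And>n. n0 \<le> n \<Longrightarrow> separated_at g Y \<omega> n \<and> separated_at g Y \<zeta> n \<and> 0 \<le> Im (\<omega> n)
                 \<and> r n \<le> - s \<and> (cmod (c n))^2 \<le> \<eta> / 16 \<and> 32 / \<eta> \<le> (cmod (d n))^2"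
    and tail: "\<And>m N. n0 \<le> m \<Longrightarrow>
                 \<mu>^2 * (\<Sum>n\<in>{m..<N}. (real n powr (-\<nu>))^2) * (2 * (1 + Y^2 / s^2)) \<le> \<eta> / 8"
    by (rule ingham_threshold[where \<mu> = \<mu> and n' = n', OF H1a H1b H2a H2b H2c c d Mpos c1pos apos s(2) g Y \<eta>(1) nu G]) (assumption | rule that)+
  show ?case
  proof (rule exI[of _ n0], intro conjI allI impI, goal_cases)
    case (2 T)
    with A have T: "T > 0" "4 * ((pi/T)^2 + 4 * Y^2) \<le> (1 - \<eta>) * g^2" by blast+
    show ?case
    proof (rule exI[of _ "\<eta> / 2 * ((pi/T) / (2 * ((pi/T)^2 + 4 * Y^2)))"], intro conjI allI impI, goal_cases)
      case (2 C D R)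
      have "summable (\<lambda>n. (cmod (C n))\<^sup>2 + (cmod (d n * D n))\<^sup>2)"
        using 2(3) summable_Suc_iff[where f = "\<lambda>n. (cmod (C n))\<^sup>2 + (cmod (d n * D n))\<^sup>2"] by simp
      moreover have "\<bar>R n\<bar> \<le> \<mu> * real n powr (-\<nu>) * sqrt ((cmod (C n))\<^sup>2 + (cmod (d n * D n))\<^sup>2)"
        if "n0 \<le> n" for n
        using 2(1) n0 that by simp
      ultimately show ?case
        using thr tail by (intro ingham_series_bound[OF T(1) g(1) \<eta> s(1) less_imp_le[OF mupos] T(2)]) auto
    qed (use T \<eta> in \<open>simp add: add_pos_nonneg\<close>)
  qed (use n0 in simp)
qed

end
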